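(* Let $(\Delta_0,\mathfrak o_0,m_0,q_0)$ be a quantized Brauer graph. Then there is a tower of quantized Brauer covering graphs $(\Delta_0,\mathfrak o_0,m_0,q_0),(\Delta_1,\mathfrak o_1,m_1,q_1),(\Delta_2,\mathfrak o_2,m_2,q_2),(\Delta_3,\mathfrak o_3,m_3,q_3)$ such that: (1) the multiplicity function $m_3$ is identically $1$; (2) the graph $\Delta_3$ has no loops; (3) the graph $\Delta_3$ has no multiple edges.
   Context: Brauer graphs. A Brauer graph $(\Delta,\mathfrak o,m)$ is a finite connected graph $\Delta$ (loops and multiple edges allowed) with vertex set (here written) $V(\Delta)$, edge set $E(\Delta)$ and at least one edge, together with a multiplicity function $m:V(\Delta)\to\mathbb Z_{\ge 1}$ and, for each vertex $\mu$, a cyclic ordering $\mathfrak o$ of the edges incident with $\mu$. A loop at $\mu$ occurs twice in the cyclic ordering at $\mu$; its two occurrences are regarded as two distinct edges (each with its own successor). Edge $j$ is the successor of edge $i$ at $\mu$ if $j$ immediately follows $i$ in the cyclic ordering at $\mu$. The valency $\operatorname{val}(\mu)$ is the number of edges incident with $\mu$, loops counted twice; if $\operatorname{val}(\mu)=1$ the unique edge at $\mu$ is its own successor. An edge $i$ is truncated at its endpoint $\mu$ if $\operatorname{val}(\mu)=1$ and $m(\mu)=1$. Fix a field $K$. A quantized Brauer graph $(\Delta,\mathfrak o,m,q)$ is a Brauer graph with a function $q:\mathcal X_\Delta\to K\setminus\{0\}$, $(i,\mu)\mapsto q_{i,\mu}$, where $\mathcal X_\Delta$ is the set of pairs $(i,\mu)$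 with $\mu$ an endpoint of $i$ and $i$ not truncated at either of its endpoints. Successor weightings. Let $G$ be a finite abelian group. For a vertex $\mu$ let $\mathcal Z_\mu$ be the set of pairs $(i,j)$ of edges with $j$ the successor of $i$ at $\mu$, and $\mathcal Z_\Delta=\bigsqcup_{\mu}\mathcal Z_\mu$ (disjoint union). A successor weighting is a function $W:\mathcal Z_\Delta\to G$. Put $\omega_\mu=\prod_{(i,j)\in\mathcal Z_\mu}W(i,j)$, let $\operatorname{ord}(\mu)$ be the order of $\omega_\mu$ in $G$, and $H_\mu=\langle\omega_\mu\rangle$. $W$ is a Brauer weighting if $\operatorname{ord}(\mu)$ divides $m(\mu)$ for all vertices $\mu$. For each $\mu$, $\sim$ is the equivalence relation on the set of pairs $(i,H_\mu g)$ ($i$ incident with $\mu$, $g\in G$) generated by $(i,H_\mu g)\sim(j,H_\mu gW(i,j))$ whenever $j$ is the successor of $i$ at $\mu$; the class of $(i,H_\mu g)$ is $[i,H_\mu g]$, and $\mathcal D_\mu$ is the set of classes. Brauer covering graph. The graph $\Delta_W$ has vertices $\mu_d$ ($\mu$ a vertex of $\Delta$, $d\in\mathcal D_\mu$) and edges $i_g$ ($i$ an edge of $\Delta$, $g\in G$). If $i$ has endpoints $\mu$ and $\nu$, then $i_g$ has endpoints $\mu_{[i,H_\mu g]}$ and $\nu_{[i,H_\nu g]}$; if $i$ is a loop at $\mu$ with its two occurrences $i,\hat i$, then $i_g$ has endpoints $\mu_{[i,H_\mu g]}$ and $\mu_{[\hat i,H_\mu g]}$. The cyclic ordering $\mathfrak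 o_W$ is defined by: if $j$ is the successor of $i$ at $\mu$, then $j_{gW(i,j)}$ is the successor of $i_g$ at $\mu_{[i,H_\mu g]}$. For a Brauer weighting, $m_W(\mu_d)=m(\mu)/\operatorname{ord}(\mu)$. Given a quantizing function $q$ on $\Delta$, $q_W(i_g,\mu_d)=q_{i,\mu}$, and $(\Delta_W,\mathfrak o_W,m_W,q_W)$ is the quantized Brauer covering graph. Towers. A sequence $(\Delta_0,\mathfrak o_0,m_0,q_0),\dots,(\Delta_n,\mathfrak o_n,m_n,q_n)$ of quantized Brauer graphs is a tower of quantized Brauer covering graphs if for each $1\le k\le n$ there are a finite abelian group $G_k$ and a Brauer weighting $W_k:\mathcal Z_{\Delta_{k-1}}\to G_k$ of $(\Delta_{k-1},\mathfrak o_{k-1},m_{k-1},q_{k-1})$ such that $(\Delta_k,\mathfrak o_k,m_k,q_k)$ is the quantized Brauer covering graph associated to $W_k$. *)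

theory Defs
  imports "HOL-Algebra.Algebra"
begin

text \<open>Quantized Brauer graphs, encoded by half-edges (edge occurrences).
  bg_half: the finite set of occurrences (each edge has two: one at each endpoint,
           a loop has its two occurrences at the same vertex);
  bg_vtx h: the vertex at which occurrence h sits;
  bg_mate h: the other occurrence of the same edge (the edge of h is the set of h and its mate);
  bg_succ h: the successor of h in the cyclic ordering at bg_vtx h;
  bg_mult: the multiplicity function;
  bg_q e mu: the quantizing value at (edge e, endpoint mu).\<close>

record ('v, 'h, 'k) qbg =
  bg_verts :: "'v set"
  bg_half  :: "'h set"
  bg_vtx   :: "'h \<Rightarrow> 'v"
  bg_mate  :: "'h \<Rightarrow> 'h"
  bg_succ  :: "'h \<Rightarrow> 'h"
  bg_mult  :: "'v \<Rightarrow> nat"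
  bg_q     :: "'h set \<Rightarrow> 'v \<Rightarrow> 'k"

definition bg_edge :: "('v, 'h, 'k) qbg \<Rightarrow> 'h \<Rightarrow> 'h set" where
  "bg_edge \<Gamma> h = {h, bg_mate \<Gamma> h}"

definition bg_edges :: "('v, 'h, 'k) qbg \<Rightarrow> 'h set set" where
  "bg_edges \<Gamma> = bg_edge \<Gamma> ` bg_half \<Gamma>"

definition bg_endpoints :: "('v, 'h, 'k) qbg \<Rightarrow> 'h \<Rightarrow> 'v set" where
  "bg_endpoints \<Gamma> h = {bg_vtx \<Gamma> h, bg_vtx \<Gamma> (bg_mate \<Gamma> h)}"

text \<open>occurrences at a vertex, valency (loops counted twice)\<close>
definition bg_at :: "('v, 'h, 'k) qbg \<Rightarrow> 'v \<Rightarrow> 'h set" where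
  "bg_at \<Gamma> \<mu> = {h \<in> bg_half \<Gamma>. bg_vtx \<Gamma> h = \<mu>}"

definition bg_val :: "('v, 'h, 'k) qbg \<Rightarrow> 'v \<Rightarrow> nat" where
  "bg_val \<Gamma> \<mu> = card (bg_at \<Gamma> \<mu>)"

definition brauer_graph :: "('v, 'h, 'k) qbg \<Rightarrow> bool" where
  "brauer_graph \<Gamma> \<longleftrightarrow>
     finite (bg_verts \<Gamma>) \<and> finite (bg_half \<Gamma>) \<and> bg_half \<Gamma> \<noteq> {} \<and>
     bg_vtx \<Gamma> ` bg_half \<Gamma> \<subseteq> bg_verts \<Gamma> \<and>
     (\<forall>h \<in> bg_half \<Gamma>. bg_mate \<Gamma> h \<in> bg_half \<Gamma> \<and> bg_mate \<Gamma> h \<noteq> h \<and>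
                      bg_mate \<Gamma> (bg_mate \<Gamma> h) = h) \<and>
     bij_betw (bg_succ \<Gamma>) (bg_half \<Gamma>) (bg_half \<Gamma>) \<and>
     (\<forall>h \<in> bg_half \<Gamma>. {(bg_succ \<Gamma> ^^ n) h | n. True} = bg_at \<Gamma> (bg_vtx \<Gamma> h)) \<and>
     (\<forall>\<mu> \<in> bg_verts \<Gamma>. bg_mult \<Gamma> \<mu> \<ge> 1) \<and>
     (\<forall>\<mu> \<in> bg_verts \<Gamma>. \<forall>\<nu> \<in> bg_verts \<Gamma>.
        (\<mu>, \<nu>) \<in> {(bg_vtx \<Gamma> h, bg_vtx \<Gamma> (bg_mate \<Gamma> h)) | h. h \<in> bg_half \<Gamma>}\<^sup>*)"

text \<open>an edge is truncated at an endpoint of valency 1 and multiplicity 1\<close>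
definition bg_trunc_vertex :: "('v, 'h, 'k) qbg \<Rightarrow> 'v \<Rightarrow> bool" where
  "bg_trunc_vertex \<Gamma> \<mu> \<longleftrightarrow> bg_val \<Gamma> \<mu> = 1 \<and> bg_mult \<Gamma> \<mu> = 1"

definition bg_X :: "('v, 'h, 'k) qbg \<Rightarrow> ('h set \<times> 'v) set" where
  "bg_X \<Gamma> = {(bg_edge \<Gamma> h, bg_vtx \<Gamma> h) | h. h \<in> bg_half \<Gamma> \<and>
                 \<not> bg_trunc_vertex \<Gamma> (bg_vtx \<Gamma> h) \<and>
                 \<not> bg_trunc_vertex \<Gamma> (bg_vtx \<Gamma> (bg_mate \<Gamma> h))}"

definition quantized_brauer_graph :: "('v, 'h, 'k::field) qbg \<Rightarrow> bool" where
  "quantized_brauer_graph \<Gamma> \<longleftrightarrow> brauer_graph \<Gamma> \<and>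
     (\<forall>(e, \<mu>) \<in> bg_X \<Gamma>. bg_q \<Gamma> e \<mu> \<noteq> 0)"

definition has_loop :: "('v, 'h, 'k) qbg \<Rightarrow> bool" where
  "has_loop \<Gamma> \<longleftrightarrow> (\<exists>h \<in> bg_half \<Gamma>. bg_vtx \<Gamma> (bg_mate \<Gamma> h) = bg_vtx \<Gamma> h)"

definition has_multiple_edges :: "('v, 'h, 'k) qbg \<Rightarrow> bool" where
  "has_multiple_edges \<Gamma> \<longleftrightarrow> (\<exists>h \<in> bg_half \<Gamma>. \<exists>h' \<in> bg_half \<Gamma>.
      bg_edge \<Gamma> h \<noteq> bg_edge \<Gamma> h' \<and> bg_endpoints \<Gamma> h = bg_endpoints \<Gamma> h')"

text \<open>A successor weighting is a function on occurrences h: W h is the weight of the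
  successor pair (h, succ h) at the vertex of h.\<close>

definition sw_omega :: "('v, 'h, 'k) qbg \<Rightarrow> 'g monoid \<Rightarrow> ('h \<Rightarrow> 'g) \<Rightarrow> 'v \<Rightarrow> 'g" where
  "sw_omega \<Gamma> G W \<mu> = finprod G W (bg_at \<Gamma> \<mu>)"

definition sw_ord :: "('v, 'h, 'k) qbg \<Rightarrow> 'g monoid \<Rightarrow> ('h \<Rightarrow> 'g) \<Rightarrow> 'v \<Rightarrow> nat" where
  "sw_ord \<Gamma> G W \<mu> = group.ord G (sw_omega \<Gamma> G W \<mu>)"

definition sw_H :: "('v, 'h, 'k) qbg \<Rightarrow> 'g monoid \<Rightarrow> ('h \<Rightarrow> 'g) \<Rightarrow> 'v \<Rightarrow> 'g set" where
  "sw_H \<Gamma> G W \<mu> = generate G {sw_omega \<Gamma> G W \<mu>}"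

definition successor_weighting :: "('v, 'h, 'k) qbg \<Rightarrow> 'g monoid \<Rightarrow> ('h \<Rightarrow> 'g) \<Rightarrow> bool" where
  "successor_weighting \<Gamma> G W \<longleftrightarrow> (\<forall>h \<in> bg_half \<Gamma>. W h \<in> carrier G)"

definition brauer_weighting :: "('v, 'h, 'k) qbg \<Rightarrow> 'g monoid \<Rightarrow> ('h \<Rightarrow> 'g) \<Rightarrow> bool" where
  "brauer_weighting \<Gamma> G W \<longleftrightarrow> successor_weighting \<Gamma> G W \<and>
     (\<forall>\<mu> \<in> bg_verts \<Gamma>. sw_ord \<Gamma> G W \<mu> dvd bg_mult \<Gamma> \<mu>)"

text \<open>generating step of the relation on pairs (h, H_mu g) with h at mu\<close>
definition sw_step :: "('v, 'h, 'k) qbg \<Rightarrow> 'g monoid \<Rightarrow> ('h \<Rightarrow> 'g) \<Rightarrow> 'v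
                       \<Rightarrow> (('h \<times> 'g set) \<times> ('h \<times> 'g set)) set" where
  "sw_step \<Gamma> G W \<mu> = {((h, C), (bg_succ \<Gamma> h, C #>\<^bsub>G\<^esub> W h)) | h C.
       h \<in> bg_at \<Gamma> \<mu> \<and> C \<in> rcosets\<^bsub>G\<^esub> (sw_H \<Gamma> G W \<mu>)}"

definition sw_class :: "('v, 'h, 'k) qbg \<Rightarrow> 'g monoid \<Rightarrow> ('h \<Rightarrow> 'g) \<Rightarrow> 'v
                        \<Rightarrow> 'h \<Rightarrow> 'g \<Rightarrow> ('h \<times> 'g set) set" where
  "sw_class \<Gamma> G W \<mu> h g =
     {y. ((h, sw_H \<Gamma> G W \<mu> #>\<^bsub>G\<^esub> g), y) \<in> (sw_step \<Gamma> G W \<mu> \<union> (sw_step \<Gamma> G W \<mu>)\<inverse>)\<^sup>*}"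

definition sw_D :: "('v, 'h, 'k) qbg \<Rightarrow> 'g monoid \<Rightarrow> ('h \<Rightarrow> 'g) \<Rightarrow> 'v \<Rightarrow> ('h \<times> 'g set) set set" where
  "sw_D \<Gamma> G W \<mu> = {sw_class \<Gamma> G W \<mu> h g | h g. h \<in> bg_at \<Gamma> \<mu> \<and> g \<in> carrier G}"

text \<open>the quantized Brauer covering graph: vertices mu_d = (mu, d), occurrences (h, g)
  (so the edge i_g consists of the occurrences (h, g), (mate h, g) of the edge i = {h, mate h})\<close>
definition bg_cover :: "('v, 'h, 'k) qbg \<Rightarrow> 'g monoid \<Rightarrow> ('h \<Rightarrow> 'g)
                        \<Rightarrow> ('v \<times> ('h \<times> 'g set) set, 'h \<times> 'g, 'k) qbg" where
  "bg_cover \<Gamma> G W =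
     \<lparr> bg_verts = {(\<mu>, d) | \<mu> d. \<mu> \<in> bg_verts \<Gamma> \<and> d \<in> sw_D \<Gamma> G W \<mu>},
       bg_half = bg_half \<Gamma> \<times> carrier G,
       bg_vtx = (\<lambda>(h, g). (bg_vtx \<Gamma> h, sw_class \<Gamma> G W (bg_vtx \<Gamma> h) h g)),
       bg_mate = (\<lambda>(h, g). (bg_mate \<Gamma> h, g)),
       bg_succ = (\<lambda>(h, g). (bg_succ \<Gamma> h, g \<otimes>\<^bsub>G\<^esub> W h)),
       bg_mult = (\<lambda>(\<mu>, d). bg_mult \<Gamma> \<mu> div sw_ord \<Gamma> G W \<mu>),
       bg_q = (\<lambda>e \<mu>'. bg_q \<Gamma> (fst ` e) (fst \<mu>')) \<rparr>"

definition tower_step :: "('v, 'h, 'k::field) qbg \<Rightarrow> 'g monoid \<Rightarrow> ('h \<Rightarrow> 'g) \<Rightarrow> bool" where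
  "tower_step \<Gamma> G W \<longleftrightarrow> comm_group G \<and> finite (carrier G) \<and>
     quantized_brauer_graph \<Gamma> \<and> brauer_weighting \<Gamma> G W \<and>
     quantized_brauer_graph (bg_cover \<Gamma> G W)"

end

theory Submission
  imports Defs
begin

text \<open>
  Every covering step is built from a cyclic group
  \<open>Z/N\<close> (realised on \<open>{..<N}\<close>) together with a successor weighting \<open>W\<close> that
  admits a potential \<open>c\<close>: \<open>W h \<cdot> c h \<cdot> c(succ h)\<inverse> \<in> H\<^sub>\<mu>\<close> at every occurrence \<open>h\<close>.
  For such weightings the equivalence classes defining the vertices of the
  covering graph can be computed explicitly (locale \<open>cov\<close>): the occurrence
  \<open>(h, g)\<close> sits over the coset \<open>H\<^sub>\<mu> (g \<cdot> c h\<inverse>)\<close>.  From this we show that the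
  covering graph is a quantized Brauer graph as soon as it is connected, and
  that connectivity follows from lifting paths of the base graph and moving
  between the levels \<open>g \<cdot> c h\<inverse>\<close> over a fixed occurrence.

  Two constructions are then carried out:
  (A) Multiplicity killing: over \<open>Z/L\<close>, \<open>L\<close> the lcm of all multiplicities, put the
      weight \<open>L / m(\<mu>)\<close> on one occurrence at each vertex \<open>\<mu>\<close>; then \<open>\<omega>\<^sub>\<mu>\<close> has
      order exactly \<open>m(\<mu>)\<close> and the covering graph has multiplicity one.
  (B) Separation: choose a connected spanning subgraph \<open>T\<close> without loops and
      parallel edges, and a potential that vanishes on \<open>T\<close> and gives every other
      edge its own nonzero voltage (one of them equal to 1); with \<open>W = \<delta>c\<close> the
      covering graph keeps multiplicity one and has neither loops nor multiple edges.  The theorem applies (A) once and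
  (B) twice.
\<close>

locale bgraph =
  fixes \<Gamma> :: "('v, 'h, 'k) qbg"
  assumes bg: "brauer_graph \<Gamma>"
begin

abbreviation "HF \<equiv> bg_half \<Gamma>"
abbreviation "VS \<equiv> bg_verts \<Gamma>"
abbreviation "vt \<equiv> bg_vtx \<Gamma>"
abbreviation "mt \<equiv> bg_mate \<Gamma>"
abbreviation "sc \<equiv> bg_succ \<Gamma>"
abbreviation "AT \<equiv> bg_at \<Gamma>"

definition adj :: "'h set \<Rightarrow> ('v \<times> 'v) set" where
  "adj S = {(vt h, vt (mt h)) | h. h \<in> S}"

lemma fin_half: "finite HF" and fin_verts: "finite VS" and half_ne: "HF \<noteq> {}"
  using bg unfolding brauer_graph_def by auto

lemma vtx_in: "h \<in> HF \<Longrightarrow> vt h \<in> VS"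
  using bg unfolding brauer_graph_def by auto

lemma mate_in: "h \<in> HF \<Longrightarrow> mt h \<in> HF"
  and mate_neq: "h \<in> HF \<Longrightarrow> mt h \<noteq> h"
  and mate_mate: "h \<in> HF \<Longrightarrow> mt (mt h) = h"
  using bg unfolding brauer_graph_def by auto

lemma succ_bij: "bij_betw sc HF HF"
  using bg unfolding brauer_graph_def by auto

lemma succ_in: "h \<in> HF \<Longrightarrow> sc h \<in> HF"
  using succ_bij bij_betwE by blast

lemma inj_succ: "inj_on sc HF"
  using succ_bij bij_betw_def by blast

lemma orbit: "h \<in> HF \<Longrightarrow> {(sc ^^ n) h | n. True} = AT (vt h)"
  using bg unfolding brauer_graph_def by auto

lemma mult_ge1: "\<mu> \<in> VS \<Longrightarrow> bg_mult \<Gamma> \<mu> \<ge> 1"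
  using bg unfolding brauer_graph_def by auto

lemma conn: "\<mu> \<in> VS \<Longrightarrow> \<nu> \<in> VS \<Longrightarrow> (\<mu>, \<nu>) \<in> (adj HF)\<^sup>*"
  using bg unfolding brauer_graph_def adj_def by auto

lemma at_iff: "x \<in> AT \<mu> \<longleftrightarrow> x \<in> HF \<and> vt x = \<mu>"
  unfolding bg_at_def by auto

lemma finite_at: "finite (AT \<mu>)"
  using fin_half unfolding bg_at_def by auto

lemma succ_vtx: "h \<in> HF \<Longrightarrow> vt (sc h) = vt h"
proof -
  assume h: "h \<in> HF"
  have "sc h \<in> {(sc ^^ n) h | n. True}" by (rule CollectI, rule exI[of _ 1]) simp
  then have "sc h \<in> AT (vt h)" by (simp only: orbit[OF h])
  then show ?thesis by (simp add: at_iff)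
qed

lemma funpow_in: "h \<in> HF \<Longrightarrow> (sc ^^ n) h \<in> HF \<and> vt ((sc ^^ n) h) = vt h"
  by (induction n) (auto simp: succ_in succ_vtx)

lemma funpow_cancel: "h \<in> HF \<Longrightarrow> h' \<in> HF \<Longrightarrow> (sc ^^ k) h = (sc ^^ k) h' \<Longrightarrow> h = h'"
proof (induction k)
  case (Suc k)
  have "(sc ^^ k) h = (sc ^^ k) h'"
    using inj_succ funpow_in Suc.prems by (simp add: inj_on_def)
  then show ?case using Suc by blast
qed simp

text \<open>Every vertex carries an occurrence, since the graph is connected and has an edge.\<close>
lemma at_ne: "\<mu> \<in> VS \<Longrightarrow> AT \<mu> \<noteq> {}"
proof -
  assume mu: "\<mu> \<in> VS"
  obtain h where h: "h \<in> HF" using half_ne by blast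
  have "(\<mu>, vt h) \<in> (adj HF)\<^sup>*" using conn mu vtx_in h by blast
  then show ?thesis
  proof (cases rule: converse_rtranclE)
    case base then show ?thesis using h by (auto simp: at_iff)
  next
    case (step z) then show ?thesis by (auto simp: adj_def at_iff)
  qed
qed

lemma succ_image_at: "sc ` AT \<mu> = AT \<mu>"
proof (rule endo_inj_surj[OF finite_at])
  show "sc ` AT \<mu> \<subseteq> AT \<mu>" using succ_in succ_vtx by (auto simp: at_iff)
  show "inj_on sc (AT \<mu>)" by (rule inj_on_subset[OF inj_succ]) (auto simp: at_iff)
qed

lemma iterates_inj:
  assumes h: "h \<in> HF"
  shows "inj_on (\<lambda>k. (sc ^^ k) h) {..<card (AT (vt h))}"
proof (rule ccontr)
  let ?p = "card (AT (vt h))"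
  assume "\<not> ?thesis"
  then obtain a b where ab: "a < b" "b < ?p" "(sc ^^ a) h = (sc ^^ b) h"
    unfolding inj_on_def by (metis lessThan_iff linorder_neqE_nat)
  define d where "d = b - a"
  have d: "0 < d" "d < ?p" "b = a + d" using ab d_def by auto
  have "(sc ^^ a) h = (sc ^^ a) ((sc ^^ d) h)"
    using ab(3) by (simp add: d(3) funpow_add)
  then have dh: "(sc ^^ d) h = h" using funpow_cancel funpow_in h by metis
  have period: "(sc ^^ (q * d)) h = h" for q
    by (induction q) (simp_all add: funpow_add dh)
  have "AT (vt h) \<subseteq> (\<lambda>k. (sc ^^ k) h) ` {..<d}"
  proof
    fix x assume "x \<in> AT (vt h)"
    then obtain n where n: "x = (sc ^^ n) h" using orbit[OF h] by blast
    have "(sc ^^ n) h = (sc ^^ (n mod d + n div d * d)) h" by simp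
    also have "\<dots> = (sc ^^ (n mod d)) ((sc ^^ (n div d * d)) h)"
      by (simp only: funpow_add o_apply)
    finally have "x = (sc ^^ (n mod d)) h" using n period by simp
    then show "x \<in> (\<lambda>k. (sc ^^ k) h) ` {..<d}" using d by auto
  qed
  then have "?p \<le> card ((\<lambda>k. (sc ^^ k) h) ` {..<d})"
    by (simp add: card_mono)
  also have "\<dots> \<le> d" using card_image_le[of "{..<d}"] by simp
  finally show False using d by simp
qed

lemma iterates_image:
  assumes h: "h \<in> HF"
  shows "(\<lambda>k. (sc ^^ k) h) ` {..<card (AT (vt h))} = AT (vt h)"
  using funpow_in[OF h] card_image[OF iterates_inj[OF h]]
  by (intro card_subset_eq[OF finite_at]) (auto simp: at_iff)

lemma iterates_period:
  assumes h: "h \<in> HF"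
  shows "(sc ^^ card (AT (vt h))) h = h"
proof -
  let ?p = "card (AT (vt h))"
  have "(sc ^^ ?p) h \<in> AT (vt h)" using funpow_in[OF h] by (simp add: at_iff)
  then obtain k where k: "k < ?p" "(sc ^^ ?p) h = (sc ^^ k) h"
    using iterates_image[OF h] by force
  have "(sc ^^ (k + (?p - k))) h = (sc ^^ k) ((sc ^^ (?p - k)) h)"
    by (simp only: funpow_add o_apply)
  then have "(sc ^^ k) ((sc ^^ (?p - k)) h) = (sc ^^ k) h" using k by simp
  then have e: "(sc ^^ (?p - k)) h = (sc ^^ 0) h" using funpow_cancel funpow_in h by simp
  show ?thesis
  proof (cases "k = 0")
    case False
    then have "?p - k = 0" using inj_onD[OF iterates_inj[OF h] e] k by simp
    then show ?thesis using k False by simp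
  qed (use k in simp)
qed

lemma edge_eq_iff:
  "h \<in> HF \<Longrightarrow> h' \<in> HF \<Longrightarrow> bg_edge \<Gamma> h = bg_edge \<Gamma> h' \<longleftrightarrow> h' = h \<or> h' = mt h"
  unfolding bg_edge_def using mate_mate mate_neq by (auto simp: doubleton_eq_iff)

end

context comm_group begin

lemma ratio_step:
  assumes "k \<in> carrier G" "a \<in> carrier G" "w \<in> carrier G" "b \<in> carrier G"
  shows "(k \<otimes> a \<otimes> w) \<otimes> inv (k \<otimes> b) = w \<otimes> a \<otimes> inv b"
proof -
  have "(k \<otimes> a \<otimes> w) \<otimes> inv (k \<otimes> b) = (k \<otimes> a \<otimes> w) \<otimes> (inv k \<otimes> inv b)"
    using assms by (simp add: inv_mult)
  also have "\<dots> = (k \<otimes> inv k) \<otimes> (w \<otimes> a \<otimes> inv b)"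
    using assms by (simp only: m_ac inv_closed m_closed)
  finally show ?thesis using assms by simp
qed

lemma ratio_step':
  assumes "y \<in> carrier G" "w \<in> carrier G" "s \<in> carrier G" "u \<in> carrier G"
  shows "(y \<otimes> w \<otimes> inv s) \<otimes> inv (y \<otimes> inv u) = w \<otimes> u \<otimes> inv s"
proof -
  have "(y \<otimes> w \<otimes> inv s) \<otimes> inv (y \<otimes> inv u) = (y \<otimes> w \<otimes> inv s) \<otimes> (inv y \<otimes> u)"
    using assms by (simp add: inv_mult)
  also have "\<dots> = (y \<otimes> inv y) \<otimes> (w \<otimes> u \<otimes> inv s)"
    using assms by (simp only: m_ac inv_closed m_closed)
  finally show ?thesis using assms by simp
qed

lemma coset_eqI:
  assumes sH: "subgroup H G" and a: "a \<in> carrier G" and b: "b \<in> carrier G"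
    and ab: "a \<otimes> inv b \<in> H"
  shows "H #> a = H #> b"
proof -
  have "a \<in> H #> b" using subgroup.rcos_module_rev[OF sH is_group b a ab] .
  then show ?thesis using repr_independence[OF _ b sH] by simp
qed

lemma coset_rcancel:
  assumes "M \<subseteq> carrier G" "M' \<subseteq> carrier G" "w \<in> carrier G" "M #> w = M' #> w"
  shows "M = M'"
proof -
  have "M = (M #> w) #> inv w" using coset_mult_assoc[of M w "inv w"] assms by simp
  also have "\<dots> = (M' #> w) #> inv w" using assms by simp
  also have "\<dots> = M'" using coset_mult_assoc[of M' w "inv w"] assms by simp
  finally show ?thesis .
qed

lemma inv_cancel_left:
  assumes "g \<in> carrier G" "a \<in> carrier G" "b \<in> carrier G" "g \<otimes> inv a = g \<otimes> inv b"
  shows "a = b"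
  using assms by (metis inv_closed inv_inv l_cancel)

lemma mul_inv_mul:
  assumes "x \<in> carrier G" "y \<in> carrier G" "z \<in> carrier G"
  shows "(x \<otimes> inv y) \<otimes> (y \<otimes> z) = x \<otimes> z"
  using assms by (simp add: m_assoc[symmetric]) (simp add: m_assoc)

lemma ratio_cross:
  assumes c: "g \<in> carrier G" "g' \<in> carrier G" "a \<in> carrier G" "a' \<in> carrier G"
    "b \<in> carrier G" "b' \<in> carrier G"
    and e1: "g \<otimes> inv a = g' \<otimes> inv a'" and e2: "g \<otimes> inv b = g' \<otimes> inv b'"
  shows "a \<otimes> b' = a' \<otimes> b"
proof -
  have "(g \<otimes> inv a) \<otimes> (a \<otimes> a') = (g' \<otimes> inv a') \<otimes> (a' \<otimes> a)" using e1 c by (simp add: m_comm)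
  then have f1: "g \<otimes> a' = g' \<otimes> a" using c by (simp add: mul_inv_mul)
  have "(g \<otimes> inv b) \<otimes> (b \<otimes> b') = (g' \<otimes> inv b') \<otimes> (b' \<otimes> b)" using e2 c by (simp add: m_comm)
  then have f2: "g \<otimes> b' = g' \<otimes> b" using c by (simp add: mul_inv_mul)
  have "(g \<otimes> g') \<otimes> (a' \<otimes> b) = (g \<otimes> a') \<otimes> (g' \<otimes> b)" using c by (simp add: m_ac)
  also have "\<dots> = (g' \<otimes> a) \<otimes> (g \<otimes> b')" using f1 f2 by simp
  also have "\<dots> = (g \<otimes> g') \<otimes> (a \<otimes> b')" using c by (simp add: m_ac)
  finally have "(a' \<otimes> b) \<otimes> (g \<otimes> g') = (a \<otimes> b') \<otimes> (g \<otimes> g')" using c by (simp add: m_comm)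
  then show ?thesis using c by simp
qed

end

section \<open>Covering graphs of weightings with a potential\<close>

locale cov = bgraph \<Gamma> for \<Gamma> :: "('v, 'h, 'k) qbg" +
  fixes G :: "'g monoid" (structure) and W :: "'h \<Rightarrow> 'g" and c :: "'h \<Rightarrow> 'g"
  assumes grp: "comm_group G" and finG: "finite (carrier G)"
    and Wc: "\<And>h. h \<in> HF \<Longrightarrow> W h \<in> carrier G"
    and cc: "\<And>h. h \<in> HF \<Longrightarrow> c h \<in> carrier G"
    and potential: "\<And>h. h \<in> HF \<Longrightarrow> W h \<otimes> c h \<otimes> inv (c (sc h)) \<in> sw_H \<Gamma> G W (vt h)"
begin

sublocale G: comm_group G by (rule grp)

abbreviation "HH \<mu> \<equiv> sw_H \<Gamma> G W \<mu>"
abbreviation "om \<mu> \<equiv> sw_omega \<Gamma> G W \<mu>"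
abbreviation "CV \<equiv> bg_cover \<Gamma> G W"

definition "V h g = (vt h, sw_class \<Gamma> G W (vt h) h g)"

abbreviation "EEC \<equiv> {(bg_vtx CV y, bg_vtx CV (bg_mate CV y)) | y. y \<in> bg_half CV}"

lemma omega_in: "om \<mu> \<in> carrier G"
  unfolding sw_omega_def by (rule G.finprod_closed) (auto simp: Pi_def at_iff Wc)

lemma HH_sub: "subgroup (HH \<mu>) G"
  unfolding sw_H_def using omega_in by (intro G.generate_is_subgroup) auto

lemma HH_car: "HH \<mu> \<subseteq> carrier G"
  using HH_sub by (rule subgroup.subset)

lemma HH_pow: "HH \<mu> = {om \<mu> [^] k | k. k \<in> (UNIV::nat set)}"
  unfolding sw_H_def by (rule G.generate_pow_on_finite_carrier[OF finG omega_in])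

lemma coset_closed: "k \<in> carrier G \<Longrightarrow> HH \<mu> #> k \<subseteq> carrier G"
  by (rule G.r_coset_subset_G[OF HH_car])

lemma step_coset:
  assumes x: "x \<in> HF" and k: "k \<in> carrier G"
  shows "(HH (vt x) #> (k \<otimes> c x)) #> W x = HH (vt x) #> (k \<otimes> c (sc x))"
proof -
  have "(HH (vt x) #> (k \<otimes> c x)) #> W x = HH (vt x) #> (k \<otimes> c x \<otimes> W x)"
    using x k by (simp add: G.coset_mult_assoc HH_car cc Wc)
  also have "\<dots> = HH (vt x) #> (k \<otimes> c (sc x))"
  proof (rule G.coset_eqI[OF HH_sub])
    have "(k \<otimes> c x \<otimes> W x) \<otimes> inv (k \<otimes> c (sc x)) = W x \<otimes> c x \<otimes> inv (c (sc x))"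
      using x k succ_in by (intro G.ratio_step) (auto simp: cc Wc)
    then show "(k \<otimes> c x \<otimes> W x) \<otimes> inv (k \<otimes> c (sc x)) \<in> HH (vt x)"
      using potential[OF x] by simp
  qed (use x k succ_in in \<open>simp_all add: cc Wc\<close>)
  finally show ?thesis .
qed

text \<open>The explicit description of the equivalence classes: the class of
  \<open>(h, H\<^sub>\<mu> g)\<close> consists of the pairs \<open>(x, H\<^sub>\<mu> (k \<cdot> c x))\<close>, \<open>x\<close> at \<open>\<mu>\<close>, for \<open>k = g \<cdot> c h\<inverse>\<close>.\<close>
definition level_class :: "'v \<Rightarrow> 'g \<Rightarrow> ('h \<times> 'g set) set" where
  "level_class \<mu> k = {(x, HH \<mu> #> (k \<otimes> c x)) | x. x \<in> AT \<mu>}"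

lemma level_class_closed:
  assumes k: "k \<in> carrier G" and y: "y \<in> level_class \<mu> k"
    and yz: "(y, z) \<in> sw_step \<Gamma> G W \<mu> \<union> (sw_step \<Gamma> G W \<mu>)\<inverse>"
  shows "z \<in> level_class \<mu> k"
proof -
  from y obtain x where x: "x \<in> AT \<mu>" "y = (x, HH \<mu> #> (k \<otimes> c x))"
    unfolding level_class_def by blast
  from yz consider "(y, z) \<in> sw_step \<Gamma> G W \<mu>" | "(z, y) \<in> sw_step \<Gamma> G W \<mu>" by blast
  then show ?thesis
  proof cases
    case 1
    then obtain C where "x \<in> AT \<mu>" "z = (sc x, C #> W x)" "C = HH \<mu> #> (k \<otimes> c x)"
      using x unfolding sw_step_def by blast
    moreover have "sc x \<in> AT \<mu>" using x succ_in succ_vtx by (simp add: at_iff)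
    ultimately show ?thesis using step_coset[OF _ k, of x] unfolding level_class_def
      by (auto simp: at_iff)
  next
    case 2
    then obtain x' D where e: "z = (x', D)" "y = (sc x', D #> W x')" "x' \<in> AT \<mu>"
      "D \<in> rcosets (HH \<mu>)"
      unfolding sw_step_def by blast
    have x': "x' \<in> HF" "vt x' = \<mu>" using e by (auto simp: at_iff)
    have "x = sc x'" "D #> W x' = HH \<mu> #> (k \<otimes> c x)" using e x by auto
    then have "D #> W x' = (HH \<mu> #> (k \<otimes> c x')) #> W x'"
      using step_coset[OF x'(1) k] x' by simp
    then have "D = HH \<mu> #> (k \<otimes> c x')"
    proof (rule G.coset_rcancel[rotated 3])
      show "D \<subseteq> carrier G" using e(4) subgroup.rcosets_carrier[OF HH_sub G.is_group] by blast
    qed (use k x' in \<open>simp_all add: coset_closed cc Wc\<close>)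
    then show ?thesis using e unfolding level_class_def by blast
  qed
qed

lemma level_class_reached:
  assumes h: "h \<in> HF" and k: "k \<in> carrier G"
  shows "((h, HH (vt h) #> (k \<otimes> c h)), ((sc ^^ n) h, HH (vt h) #> (k \<otimes> c ((sc ^^ n) h))))
           \<in> (sw_step \<Gamma> G W (vt h) \<union> (sw_step \<Gamma> G W (vt h))\<inverse>)\<^sup>*"
proof (induction n)
  case (Suc n)
  define x where "x = (sc ^^ n) h"
  have x: "x \<in> HF" "vt x = vt h" using funpow_in[OF h] x_def by auto
  have "(HH (vt h) #> (k \<otimes> c x)) \<in> rcosets (HH (vt h))"
    using G.rcosetsI[OF HH_car] k cc x by simp
  then have "((x, HH (vt h) #> (k \<otimes> c x)), (sc x, (HH (vt h) #> (k \<otimes> c x)) #> W x))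
               \<in> sw_step \<Gamma> G W (vt h)"
    unfolding sw_step_def using x by (auto simp: at_iff)
  then show ?case using Suc step_coset[OF x(1) k] x unfolding x_def
    by (simp add: rtrancl_into_rtrancl)
qed simp

lemma class_char:
  assumes h: "h \<in> HF" and g: "g \<in> carrier G"
  shows "sw_class \<Gamma> G W (vt h) h g = level_class (vt h) (g \<otimes> inv (c h))"
proof -
  define k where "k = g \<otimes> inv (c h)"
  have k: "k \<in> carrier G" using g h cc k_def by simp
  have kh: "k \<otimes> c h = g" using g h cc unfolding k_def by (simp add: G.m_assoc)
  have start: "(h, HH (vt h) #> g) \<in> level_class (vt h) k"
    using h kh unfolding level_class_def by (auto simp: at_iff intro!: exI[of _ h])
  show ?thesis
  proof
    show "sw_class \<Gamma> G W (vt h) h g \<subseteq> level_class (vt h) (g \<otimes> inv (c h))"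
    proof
      fix y assume "y \<in> sw_class \<Gamma> G W (vt h) h g"
      then have "((h, HH (vt h) #> g), y) \<in> (sw_step \<Gamma> G W (vt h) \<union> (sw_step \<Gamma> G W (vt h))\<inverse>)\<^sup>*"
        unfolding sw_class_def by simp
      then show "y \<in> level_class (vt h) (g \<otimes> inv (c h))"
        by (induction rule: rtrancl_induct) (use start level_class_closed[OF k] k_def in auto)
    qed
    show "level_class (vt h) (g \<otimes> inv (c h)) \<subseteq> sw_class \<Gamma> G W (vt h) h g"
    proof
      fix y assume "y \<in> level_class (vt h) (g \<otimes> inv (c h))"
      then obtain x where x: "x \<in> AT (vt h)" "y = (x, HH (vt h) #> (k \<otimes> c x))"
        unfolding level_class_def k_def by blast
      then obtain n where "x = (sc ^^ n) h" using orbit[OF h] by blast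
      then show "y \<in> sw_class \<Gamma> G W (vt h) h g"
        using level_class_reached[OF h k, of n] x kh unfolding sw_class_def by simp
    qed
  qed
qed

lemma V_eq:
  assumes h: "h \<in> HF" and h': "h' \<in> HF" and g: "g \<in> carrier G" and g': "g' \<in> carrier G"
  shows "V h g = V h' g' \<longleftrightarrow> vt h = vt h' \<and>
           HH (vt h) #> (g \<otimes> inv (c h)) = HH (vt h) #> (g' \<otimes> inv (c h'))"
proof -
  have shift: "HH \<mu> #> (k \<otimes> c x) = (HH \<mu> #> k) #> c x" if "k \<in> carrier G" "x \<in> HF" for \<mu> k x
    using that by (simp add: G.coset_mult_assoc HH_car cc)
  have lc: "level_class \<mu> k = {(x, (HH \<mu> #> k) #> c x) | x. x \<in> AT \<mu>}"
    if "k \<in> carrier G" for \<mu> k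
    using shift[OF that] unfolding level_class_def by (auto simp: at_iff)
  have k: "g \<otimes> inv (c h) \<in> carrier G" "g' \<otimes> inv (c h') \<in> carrier G" using g g' h h' cc by auto
  have V: "V h g = (vt h, level_class (vt h) (g \<otimes> inv (c h)))"
    "V h' g' = (vt h', level_class (vt h') (g' \<otimes> inv (c h')))"
    unfolding V_def using class_char h h' g g' by auto
  show ?thesis
  proof
    assume e: "V h g = V h' g'"
    then have v: "vt h = vt h'" unfolding V_def by simp
    have "(h, (HH (vt h) #> (g \<otimes> inv (c h))) #> c h) \<in> level_class (vt h) (g \<otimes> inv (c h))"
      using h unfolding lc[OF k(1)] by (auto simp: at_iff)
    also have "level_class (vt h) (g \<otimes> inv (c h)) = level_class (vt h) (g' \<otimes> inv (c h'))"
      using e v unfolding V by simp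
    finally have "(HH (vt h) #> (g \<otimes> inv (c h))) #> c h = (HH (vt h) #> (g' \<otimes> inv (c h'))) #> c h"
      unfolding lc[OF k(2)] by auto
    then have "HH (vt h) #> (g \<otimes> inv (c h)) = HH (vt h) #> (g' \<otimes> inv (c h'))"
      by (rule G.coset_rcancel[rotated 3]) (use k h in \<open>simp_all add: coset_closed cc\<close>)
    then show "vt h = vt h' \<and> HH (vt h) #> (g \<otimes> inv (c h)) = HH (vt h) #> (g' \<otimes> inv (c h'))"
      using v by simp
  next
    assume "vt h = vt h' \<and> HH (vt h) #> (g \<otimes> inv (c h)) = HH (vt h) #> (g' \<otimes> inv (c h'))"
    then have v: "vt h' = vt h" and cs: "HH (vt h) #> (g \<otimes> inv (c h)) = HH (vt h) #> (g' \<otimes> inv (c h'))"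
      by auto
    show "V h g = V h' g'" unfolding V lc[OF k(1)] lc[OF k(2)] v cs ..
  qed
qed

lemma CV_half: "bg_half CV = HF \<times> carrier G" by (simp add: bg_cover_def)
lemma CV_vtx: "bg_vtx CV (h, g) = V h g" by (simp add: bg_cover_def V_def)
lemma CV_mate: "bg_mate CV (h, g) = (mt h, g)" by (simp add: bg_cover_def)
lemma CV_succ: "bg_succ CV (h, g) = (sc h, g \<otimes> W h)" by (simp add: bg_cover_def)
lemma CV_mult: "bg_mult CV (\<mu>, d) = bg_mult \<Gamma> \<mu> div sw_ord \<Gamma> G W \<mu>" by (simp add: bg_cover_def)
lemma CV_q: "bg_q CV e \<mu>' = bg_q \<Gamma> (fst ` e) (fst \<mu>')" by (simp add: bg_cover_def)

lemma CV_verts: "bg_verts CV = (\<lambda>(h, g). V h g) ` (HF \<times> carrier G)"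
proof
  show "bg_verts CV \<subseteq> (\<lambda>(h, g). V h g) ` (HF \<times> carrier G)"
  proof
    fix y assume "y \<in> bg_verts CV"
    then obtain \<mu> h g where y: "y = (\<mu>, sw_class \<Gamma> G W \<mu> h g)" "h \<in> AT \<mu>" "g \<in> carrier G"
      by (auto simp: bg_cover_def sw_D_def)
    then have "y = V h g" "h \<in> HF" by (auto simp: V_def at_iff)
    then show "y \<in> (\<lambda>(h, g). V h g) ` (HF \<times> carrier G)" using y by force
  qed
  show "(\<lambda>(h, g). V h g) ` (HF \<times> carrier G) \<subseteq> bg_verts CV"
    using vtx_in by (force simp: bg_cover_def sw_D_def V_def at_iff)
qed

lemma cover_edge: "k \<in> HF \<Longrightarrow> l \<in> carrier G \<Longrightarrow> (V k l, V (mt k) l) \<in> EEC"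
  by (force simp: CV_half CV_vtx CV_mate)

lemma V_succ:
  assumes x: "x \<in> HF" and y: "y \<in> carrier G"
  shows "V (sc x) (y \<otimes> W x) = V x y"
proof -
  have sx: "sc x \<in> HF" "vt (sc x) = vt x" using succ_in succ_vtx x by auto
  have "HH (vt x) #> (y \<otimes> W x \<otimes> inv (c (sc x))) = HH (vt x) #> (y \<otimes> inv (c x))"
  proof (rule G.coset_eqI[OF HH_sub])
    have "(y \<otimes> W x \<otimes> inv (c (sc x))) \<otimes> inv (y \<otimes> inv (c x)) = W x \<otimes> c x \<otimes> inv (c (sc x))"
      using x y sx by (intro G.ratio_step') (auto simp: Wc cc)
    then show "(y \<otimes> W x \<otimes> inv (c (sc x))) \<otimes> inv (y \<otimes> inv (c x)) \<in> HH (vt x)"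
      using potential[OF x] by simp
  qed (use x y sx in \<open>simp_all add: Wc cc\<close>)
  then show ?thesis using V_eq[OF sx(1) x _ y] x y sx by (simp add: Wc)
qed

lemma V_same_occ:
  assumes h: "h \<in> HF" and g: "g \<in> carrier G" and g': "g' \<in> carrier G"
  shows "V h g = V h g' \<longleftrightarrow> HH (vt h) #> g = HH (vt h) #> g'"
proof -
  have split: "HH (vt h) #> (x \<otimes> inv (c h)) = (HH (vt h) #> x) #> inv (c h)"
    if "x \<in> carrier G" for x
    using that h cc by (simp add: G.coset_mult_assoc HH_car)
  have "(HH (vt h) #> g) #> inv (c h) = (HH (vt h) #> g') #> inv (c h)
          \<longleftrightarrow> HH (vt h) #> g = HH (vt h) #> g'"
    using G.coset_rcancel[of "HH (vt h) #> g" "HH (vt h) #> g'" "inv (c h)"] g g' h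
    by (auto simp: coset_closed cc)
  then show ?thesis using V_eq[OF h h g g'] split g g' by simp
qed

lemma V_coset:
  assumes h: "h \<in> HF" and g: "g \<in> carrier G" and \<eta>: "\<eta> \<in> HH (vt h)"
  shows "V h (g \<otimes> \<eta>) = V h g"
proof -
  have \<eta>c: "\<eta> \<in> carrier G" using \<eta> HH_car by blast
  have "HH (vt h) #> (g \<otimes> \<eta>) = HH (vt h) #> g"
  proof (rule G.coset_eqI[OF HH_sub])
    show "(g \<otimes> \<eta>) \<otimes> inv g \<in> HH (vt h)" using g \<eta> \<eta>c by (simp add: G.m_ac)
  qed (use g \<eta>c in simp_all)
  then show ?thesis using V_same_occ h g \<eta>c by simp
qed

text \<open>Lifts with the same "level" \<open>l\<close>, i.e. group label \<open>l \<cdot> c x\<close>, of occurrences at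
  the same vertex sit at the same vertex of the covering graph.\<close>
lemma V_level:
  assumes "x \<in> HF" "x' \<in> HF" "vt x = vt x'" "l \<in> carrier G"
  shows "V x (l \<otimes> c x) = V x' (l \<otimes> c x')"
  using assms cc V_eq[of x x' "l \<otimes> c x" "l \<otimes> c x'"] by (simp add: G.m_assoc)

definition walk_weight :: "nat \<Rightarrow> 'h \<Rightarrow> 'g" where
  "walk_weight n h = finprod G (\<lambda>j. W ((sc ^^ j) h)) {..<n}"

lemma walk_weight_in: "h \<in> HF \<Longrightarrow> walk_weight n h \<in> carrier G"
  unfolding walk_weight_def by (rule G.finprod_closed) (auto simp: Pi_def Wc funpow_in)

lemma cover_iter:
  assumes h: "h \<in> HF" and g: "g \<in> carrier G"
  shows "(bg_succ CV ^^ n) (h, g) = ((sc ^^ n) h, g \<otimes> walk_weight n h)"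
proof (induction n)
  case 0 then show ?case using g by (simp add: walk_weight_def)
next
  case (Suc n)
  have w: "W ((sc ^^ n) h) \<in> carrier G" using Wc funpow_in h by auto
  have "walk_weight (Suc n) h = W ((sc ^^ n) h) \<otimes> walk_weight n h"
    unfolding walk_weight_def lessThan_Suc using w
    by (subst G.finprod_insert) (auto simp: Pi_def Wc funpow_in h)
  then show ?case using Suc w walk_weight_in[OF h] g by (simp add: CV_succ G.m_ac)
qed

lemma cover_iter_vtx:
  assumes h: "h \<in> HF" and g: "g \<in> carrier G"
  shows "V ((sc ^^ n) h) (g \<otimes> walk_weight n h) = V h g"
proof (induction n)
  case 0 then show ?case using g by (simp add: walk_weight_def)
next
  case (Suc n)
  have x: "(sc ^^ n) h \<in> HF" using funpow_in h by simp
  have y: "g \<otimes> walk_weight n h \<in> carrier G" using g walk_weight_in h by simp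
  have "(sc ^^ Suc n) h = sc ((sc ^^ n) h)"
    "g \<otimes> walk_weight (Suc n) h = (g \<otimes> walk_weight n h) \<otimes> W ((sc ^^ n) h)"
    using cover_iter[OF h g, of "Suc n"] cover_iter[OF h g, of n] by (simp_all add: CV_succ)
  then show ?case using V_succ[OF x y] Suc by simp
qed

lemma walk_weight_round:
  assumes h: "h \<in> HF"
  shows "walk_weight (card (AT (vt h))) h = om (vt h)"
proof -
  let ?p = "card (AT (vt h))"
  have "om (vt h) = finprod G W ((\<lambda>k. (sc ^^ k) h) ` {..<?p})"
    unfolding sw_omega_def using iterates_image[OF h] by simp
  also have "\<dots> = finprod G (\<lambda>k. W ((sc ^^ k) h)) {..<?p}"
    by (rule G.finprod_reindex) (auto simp: Pi_def Wc funpow_in h iterates_inj[OF h])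
  finally show ?thesis unfolding walk_weight_def by simp
qed

lemma cover_rounds:
  assumes h: "h \<in> HF" and z: "z \<in> carrier G"
  shows "(bg_succ CV ^^ (card (AT (vt h)) * k)) (h, z) = (h, z \<otimes> om (vt h) [^] k)"
proof (induction k)
  case 0 then show ?case using z by simp
next
  case (Suc k)
  let ?p = "card (AT (vt h))"
  have "(bg_succ CV ^^ (?p * Suc k)) (h, z) = (bg_succ CV ^^ ?p) (h, z \<otimes> om (vt h) [^] k)"
    using Suc by (simp add: funpow_add)
  also have "\<dots> = (h, z \<otimes> om (vt h) [^] k \<otimes> om (vt h))"
    using cover_iter[OF h, of "z \<otimes> om (vt h) [^] k" ?p] walk_weight_round[OF h]
      iterates_period[OF h] z omega_in by simp
  finally show ?case using z omega_in by (simp add: G.m_assoc)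
qed

lemma cover_orbit:
  assumes h: "h \<in> HF" and g: "g \<in> carrier G"
  shows "{(bg_succ CV ^^ n) (h, g) | n. True} = bg_at CV (V h g)"
proof
  show "{(bg_succ CV ^^ n) (h, g) | n. True} \<subseteq> bg_at CV (V h g)"
    using cover_iter[OF h g] cover_iter_vtx[OF h g] funpow_in[OF h] g walk_weight_in[OF h]
    by (auto simp: bg_at_def CV_half CV_vtx)
  show "bg_at CV (V h g) \<subseteq> {(bg_succ CV ^^ n) (h, g) | n. True}"
  proof
    fix x assume "x \<in> bg_at CV (V h g)"
    then obtain h' g' where x: "x = (h', g')" "h' \<in> HF" "g' \<in> carrier G" "V h' g' = V h g"
      by (auto simp: bg_at_def CV_half CV_vtx)
    then have "h' \<in> AT (vt h)" using V_eq h g by (auto simp: at_iff)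
    then obtain n where n: "h' = (sc ^^ n) h" using orbit[OF h] by blast
    define y where "y = g \<otimes> walk_weight n h"
    have y: "y \<in> carrier G" using y_def g walk_weight_in h by simp
    have "V h' y = V h' g'" using cover_iter_vtx[OF h g, of n] x n y_def by simp
    then have "g' \<in> HH (vt h') #> y"
      using V_same_occ[OF x(2) y x(3)] G.repr_independenceD[OF HH_sub x(3)] by simp
    then obtain \<eta> where \<eta>: "\<eta> \<in> HH (vt h')" "g' = \<eta> \<otimes> y" unfolding r_coset_def by blast
    then obtain k :: nat where "\<eta> = om (vt h') [^] k" using HH_pow by blast
    then have g': "g' = y \<otimes> om (vt h') [^] k" using \<eta> y omega_in by (simp add: G.m_comm)
    have "(bg_succ CV ^^ (card (AT (vt h')) * k + n)) (h, g)
            = (bg_succ CV ^^ (card (AT (vt h')) * k)) (h', y)"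
      using cover_iter[OF h g] n y_def by (simp add: funpow_add)
    also have "\<dots> = x" using cover_rounds[OF x(2) y] g' x(1) by simp
    finally show "x \<in> {(bg_succ CV ^^ n) (h, g) | n. True}" by (auto intro!: exI)
  qed
qed

lemma cover_succ_bij: "bij_betw (bg_succ CV) (bg_half CV) (bg_half CV)"
proof (rule bij_betwI')
  fix x y assume "x \<in> bg_half CV" "y \<in> bg_half CV"
  then obtain a b a' b' where ab: "x = (a, b)" "a \<in> HF" "b \<in> carrier G"
    "y = (a', b')" "a' \<in> HF" "b' \<in> carrier G" by (auto simp: CV_half)
  show "(bg_succ CV x = bg_succ CV y) = (x = y)"
  proof
    assume "bg_succ CV x = bg_succ CV y"
    then have "sc a = sc a'" "b \<otimes> W a = b' \<otimes> W a'" using ab by (auto simp: CV_succ)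
    moreover from this have "a = a'" using inj_onD[OF inj_succ] ab by blast
    ultimately show "x = y" using ab Wc by simp
  qed simp
next
  fix x assume "x \<in> bg_half CV"
  then show "bg_succ CV x \<in> bg_half CV" using succ_in Wc by (auto simp: CV_half CV_succ)
next
  fix y assume "y \<in> bg_half CV"
  then obtain k z where kz: "y = (k, z)" "k \<in> HF" "z \<in> carrier G" by (auto simp: CV_half)
  obtain a where a: "a \<in> HF" "k = sc a" using succ_bij kz unfolding bij_betw_def by blast
  have "y = bg_succ CV (a, z \<otimes> inv (W a))" using a kz Wc by (simp add: CV_succ G.m_assoc)
  moreover have "(a, z \<otimes> inv (W a)) \<in> bg_half CV" using a kz Wc by (simp add: CV_half)
  ultimately show "\<exists>x\<in>bg_half CV. y = bg_succ CV x" by blast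
qed

lemma lift_vertices:
  assumes S: "S \<subseteq> HF" "\<And>k. k \<in> S \<Longrightarrow> c (mt k) = c k"
    and S_conn: "\<And>\<mu> \<nu>. \<mu> \<in> VS \<Longrightarrow> \<nu> \<in> VS \<Longrightarrow> (\<mu>, \<nu>) \<in> (adj S)\<^sup>*"
    and h: "h \<in> HF" and h': "h' \<in> HF" and l: "l \<in> carrier G"
  shows "(V h (l \<otimes> c h), V h' (l \<otimes> c h')) \<in> EEC\<^sup>*"
proof -
  have "\<forall>x \<in> AT \<nu>. (V h (l \<otimes> c h), V x (l \<otimes> c x)) \<in> EEC\<^sup>*" if "(vt h, \<nu>) \<in> (adj S)\<^sup>*" for \<nu>
    using that
  proof (induction rule: rtrancl_induct)
    case base
    show ?case
    proof
      fix x assume "x \<in> AT (vt h)"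
      then have "V h (l \<otimes> c h) = V x (l \<otimes> c x)" using V_level[of h x l] h l by (simp add: at_iff)
      then show "(V h (l \<otimes> c h), V x (l \<otimes> c x)) \<in> EEC\<^sup>*" by simp
    qed
  next
    case (step \<mu> \<nu>)
    then obtain k where k: "k \<in> S" "\<mu> = vt k" "\<nu> = vt (mt k)" unfolding adj_def by blast
    have kH: "k \<in> HF" "mt k \<in> HF" using k S mate_in by auto
    have "(V h (l \<otimes> c h), V k (l \<otimes> c k)) \<in> EEC\<^sup>*" using step.IH k kH by (simp add: at_iff)
    moreover have "(V k (l \<otimes> c k), V (mt k) (l \<otimes> c (mt k))) \<in> EEC"
      using cover_edge[of k "l \<otimes> c k"] S(2)[OF k(1)] kH l cc by simp
    ultimately have path: "(V h (l \<otimes> c h), V (mt k) (l \<otimes> c (mt k))) \<in> EEC\<^sup>*" ..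
    show ?case
    proof
      fix x assume "x \<in> AT \<nu>"
      then have "V (mt k) (l \<otimes> c (mt k)) = V x (l \<otimes> c x)"
        using V_level[of "mt k" x l] kH k l by (simp add: at_iff)
      then show "(V h (l \<otimes> c h), V x (l \<otimes> c x)) \<in> EEC\<^sup>*" using path by simp
    qed
  qed
  moreover have "(vt h, vt h') \<in> (adj S)\<^sup>*" using S_conn vtx_in h h' by blast
  ultimately show ?thesis using h' by (simp add: at_iff)
qed

lemma cover_connected:
  assumes S: "S \<subseteq> HF" "\<And>k. k \<in> S \<Longrightarrow> c (mt k) = c k"
    and S_conn: "\<And>\<mu> \<nu>. \<mu> \<in> VS \<Longrightarrow> \<nu> \<in> VS \<Longrightarrow> (\<mu>, \<nu>) \<in> (adj S)\<^sup>*"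
    and h0: "h0 \<in> HF"
    and levels: "\<And>l. l \<in> carrier G \<Longrightarrow> (V h0 (c h0), V h0 (l \<otimes> c h0)) \<in> EEC\<^sup>*"
    and x: "x \<in> bg_half CV"
  shows "(V h0 (c h0), bg_vtx CV x) \<in> EEC\<^sup>*"
proof -
  obtain h g where hg: "x = (h, g)" "h \<in> HF" "g \<in> carrier G" using x by (auto simp: CV_half)
  define l where "l = g \<otimes> inv (c h)"
  have l: "l \<in> carrier G" "l \<otimes> c h = g" using hg cc l_def by (simp_all add: G.m_assoc)
  have "(V h0 (c h0), V h0 (l \<otimes> c h0)) \<in> EEC\<^sup>*" by (rule levels[OF l(1)])
  also have "(V h0 (l \<otimes> c h0), V h (l \<otimes> c h)) \<in> EEC\<^sup>*"
    by (rule lift_vertices[OF S S_conn h0 hg(2) l(1)])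
  finally show ?thesis using hg l by (simp add: CV_vtx)
qed

lemma cover_adj_sym: "sym EEC"
proof (rule symI)
  fix p q assume "(p, q) \<in> EEC"
  then obtain h g where "h \<in> HF" "g \<in> carrier G" "p = V h g" "q = V (mt h) g"
    by (auto simp: CV_half CV_vtx CV_mate)
  then show "(q, p) \<in> EEC" using cover_edge[of "mt h" g] mate_in mate_mate by simp
qed

lemma cover_mult_pos:
  assumes bw: "\<And>\<mu>. \<mu> \<in> VS \<Longrightarrow> sw_ord \<Gamma> G W \<mu> dvd bg_mult \<Gamma> \<mu>"
    and v: "v \<in> bg_verts CV"
  shows "1 \<le> bg_mult CV v"
proof -
  obtain h g where hg: "v = V h g" "h \<in> HF" using v unfolding CV_verts by auto
  have m1: "bg_mult \<Gamma> (vt h) \<ge> 1" using mult_ge1 vtx_in hg by simp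
  have d: "sw_ord \<Gamma> G W (vt h) dvd bg_mult \<Gamma> (vt h)" using bw vtx_in hg by simp
  then have "0 < bg_mult \<Gamma> (vt h) div sw_ord \<Gamma> G W (vt h)"
    using m1 by (auto simp: div_greater_zero_iff dvd_imp_le elim: dvdE)
  then show ?thesis using hg by (simp add: V_def CV_mult)
qed

lemma cover_brauer:
  assumes bw: "\<And>\<mu>. \<mu> \<in> VS \<Longrightarrow> sw_ord \<Gamma> G W \<mu> dvd bg_mult \<Gamma> \<mu>"
    and cn: "\<And>x. x \<in> bg_half CV \<Longrightarrow> (b, bg_vtx CV x) \<in> EEC\<^sup>*"
  shows "brauer_graph CV"
  unfolding brauer_graph_def
proof (intro conjI)
  show "finite (bg_verts CV)" unfolding CV_verts using fin_half finG by simp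
  show "finite (bg_half CV)" unfolding CV_half using fin_half finG by simp
  show "bg_half CV \<noteq> {}" unfolding CV_half using half_ne by auto
  show "bg_vtx CV ` bg_half CV \<subseteq> bg_verts CV" unfolding CV_verts CV_half by (auto simp: CV_vtx)
  show "\<forall>h\<in>bg_half CV. bg_mate CV h \<in> bg_half CV \<and> bg_mate CV h \<noteq> h \<and> bg_mate CV (bg_mate CV h) = h"
    by (auto simp: CV_half CV_mate mate_in mate_neq mate_mate)
  show "bij_betw (bg_succ CV) (bg_half CV) (bg_half CV)" by (rule cover_succ_bij)
  show "\<forall>h\<in>bg_half CV. {(bg_succ CV ^^ n) h |n. True} = bg_at CV (bg_vtx CV h)"
    using cover_orbit by (auto simp: CV_half CV_vtx)
  show "\<forall>\<mu>\<in>bg_verts CV. 1 \<le> bg_mult CV \<mu>" using cover_mult_pos[OF bw] by blast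
  show "\<forall>\<mu>\<in>bg_verts CV. \<forall>\<nu>\<in>bg_verts CV. (\<mu>, \<nu>) \<in> EEC\<^sup>*"
  proof (intro ballI)
    fix \<mu>' \<nu>' assume "\<mu>' \<in> bg_verts CV" "\<nu>' \<in> bg_verts CV"
    then obtain x x' where x: "x \<in> bg_half CV" "\<mu>' = bg_vtx CV x"
      and x': "x' \<in> bg_half CV" "\<nu>' = bg_vtx CV x'"
      unfolding CV_verts by (auto simp: CV_vtx CV_half)
    have "(\<mu>', b) \<in> EEC\<^sup>*" using symD[OF sym_rtrancl[OF cover_adj_sym] cn[OF x(1)]] x by simp
    also have "(b, \<nu>') \<in> EEC\<^sup>*" using cn[OF x'(1)] x' by simp
    finally show "(\<mu>', \<nu>') \<in> EEC\<^sup>*" .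
  qed
qed

text \<open>Truncated edges lift to truncated edges (multiplicity one forces \<open>W h = \<one>\<close>).\<close>
lemma cover_trunc:
  assumes x: "x \<in> HF" and g: "g \<in> carrier G" and tr: "bg_trunc_vertex \<Gamma> (vt x)"
    and bw: "sw_ord \<Gamma> G W (vt x) dvd bg_mult \<Gamma> (vt x)"
  shows "bg_trunc_vertex CV (V x g)"
proof -
  have c1: "card (AT (vt x)) = 1" and m1: "bg_mult \<Gamma> (vt x) = 1"
    using tr unfolding bg_trunc_vertex_def bg_val_def by auto
  obtain a where "AT (vt x) = {a}" using c1 card_1_singletonE by blast
  moreover have "x \<in> AT (vt x)" using x by (simp add: at_iff)
  ultimately have A: "AT (vt x) = {x}" by simp
  have "sc x \<in> AT (vt x)" using x succ_in succ_vtx by (simp add: at_iff)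
  then have scx: "sc x = x" using A by simp
  have o1: "sw_ord \<Gamma> G W (vt x) = 1" using bw m1 by simp
  then have "G.ord (W x) = 1" unfolding sw_ord_def sw_omega_def A using Wc x by simp
  then have W1: "W x = \<one>" using G.ord_eq_1 Wc x by blast
  have "(bg_succ CV ^^ n) (x, g) = (x, g)" for n
    by (induction n) (simp_all add: CV_succ scx W1 g)
  then have "{(bg_succ CV ^^ n) (x, g) | n. True} = {(x, g)}" by auto
  then have "bg_val CV (V x g) = 1" unfolding bg_val_def cover_orbit[OF x g, symmetric] by simp
  moreover have "bg_mult CV (V x g) = 1" using m1 o1 by (simp add: V_def CV_mult)
  ultimately show ?thesis unfolding bg_trunc_vertex_def by simp
qed

lemma cover_X:
  assumes bw: "\<And>\<mu>. \<mu> \<in> VS \<Longrightarrow> sw_ord \<Gamma> G W \<mu> dvd bg_mult \<Gamma> \<mu>"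
    and e: "(e, \<mu>') \<in> bg_X CV"
  shows "\<exists>(e0, \<mu>0) \<in> bg_X \<Gamma>. bg_q CV e \<mu>' = bg_q \<Gamma> e0 \<mu>0"
proof -
  obtain y where y: "y \<in> bg_half CV" "e = bg_edge CV y" "\<mu>' = bg_vtx CV y"
    "\<not> bg_trunc_vertex CV (bg_vtx CV y)" "\<not> bg_trunc_vertex CV (bg_vtx CV (bg_mate CV y))"
    using e unfolding bg_X_def by blast
  obtain h g where hg: "y = (h, g)" "h \<in> HF" "g \<in> carrier G" using y(1) by (auto simp: CV_half)
  have mh: "mt h \<in> HF" using mate_in hg by simp
  have "\<not> bg_trunc_vertex \<Gamma> (vt h)" "\<not> bg_trunc_vertex \<Gamma> (vt (mt h))"
    using cover_trunc[OF hg(2) hg(3) _ bw[OF vtx_in[OF hg(2)]]]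
      cover_trunc[OF mh hg(3) _ bw[OF vtx_in[OF mh]]] y(4,5) hg
    by (auto simp: CV_vtx CV_mate)
  then have "(bg_edge \<Gamma> h, vt h) \<in> bg_X \<Gamma>" unfolding bg_X_def using hg by blast
  moreover have "fst ` e = bg_edge \<Gamma> h" "fst \<mu>' = vt h"
    using y hg by (auto simp: bg_edge_def CV_mate CV_vtx V_def)
  ultimately show ?thesis by (auto simp: CV_q)
qed

lemma cover_mult_one:
  assumes "\<And>\<mu>. \<mu> \<in> VS \<Longrightarrow> sw_ord \<Gamma> G W \<mu> = bg_mult \<Gamma> \<mu>"
  shows "\<forall>v \<in> bg_verts CV. bg_mult CV v = 1"
proof
  fix v assume "v \<in> bg_verts CV"
  then obtain h g where "v = V h g" "h \<in> HF" unfolding CV_verts by auto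
  then show "bg_mult CV v = 1" using assms vtx_in mult_ge1 by (fastforce simp: V_def CV_mult)
qed

end

lemma cover_tower_step:
  fixes \<Gamma> :: "('v, 'h, 'k::field) qbg" and G :: "'g monoid"
  assumes cv: "cov \<Gamma> G W c" and q: "quantized_brauer_graph \<Gamma>"
    and bw: "\<And>\<mu>. \<mu> \<in> bg_verts \<Gamma> \<Longrightarrow> sw_ord \<Gamma> G W \<mu> dvd bg_mult \<Gamma> \<mu>"
    and bgc: "brauer_graph (bg_cover \<Gamma> G W)"
  shows "tower_step \<Gamma> G W"
proof -
  interpret cov \<Gamma> G W c by (rule cv)
  have "quantized_brauer_graph CV"
    unfolding quantized_brauer_graph_def
    using bgc cover_X[OF bw] q unfolding quantized_brauer_graph_def by fastforce
  then show ?thesis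
    unfolding tower_step_def brauer_weighting_def successor_weighting_def
    using grp finG q bw Wc by simp
qed

section \<open>Cyclic groups\<close>

definition Zm :: "nat \<Rightarrow> nat monoid" where
  "Zm N = \<lparr>carrier = {..<N}, monoid.mult = (\<lambda>x y. (x + y) mod N), one = 0\<rparr>"

lemma Zm_simps: "carrier (Zm N) = {..<N}" "x \<otimes>\<^bsub>Zm N\<^esub> y = (x + y) mod N" "\<one>\<^bsub>Zm N\<^esub> = 0"
  by (simp_all add: Zm_def)

lemma Zm_cg: assumes N: "N > 0" shows "comm_group (Zm N)"
proof (rule comm_groupI)
  fix x y z assume x: "x \<in> carrier (Zm N)"
  show "x \<otimes>\<^bsub>Zm N\<^esub> y \<in> carrier (Zm N)" using N by (simp add: Zm_simps)
  show "x \<otimes>\<^bsub>Zm N\<^esub> y \<otimes>\<^bsub>Zm N\<^esub> z = x \<otimes>\<^bsub>Zm N\<^esub> (y \<otimes>\<^bsub>Zm N\<^esub> z)"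
    by (simp add: Zm_simps mod_add_left_eq mod_add_right_eq add.assoc)
  show "x \<otimes>\<^bsub>Zm N\<^esub> y = y \<otimes>\<^bsub>Zm N\<^esub> x" by (simp add: Zm_simps add.commute)
  show "\<one>\<^bsub>Zm N\<^esub> \<otimes>\<^bsub>Zm N\<^esub> x = x" using x by (simp add: Zm_simps)
  have "((N - x) mod N + x) mod N = 0" using x by (simp add: Zm_simps mod_add_left_eq)
  then show "\<exists>y\<in>carrier (Zm N). y \<otimes>\<^bsub>Zm N\<^esub> x = \<one>\<^bsub>Zm N\<^esub>"
    using N by (auto simp: Zm_simps intro!: bexI[of _ "(N - x) mod N"])
qed (use N in \<open>simp add: Zm_simps\<close>)

lemma Zm_pow:
  assumes N: "N > 0"
  shows "x [^]\<^bsub>Zm N\<^esub> (k::nat) = (k * x) mod N"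
proof -
  interpret comm_group "Zm N" by (rule Zm_cg[OF N])
  show ?thesis
    by (induction k) (simp_all add: Zm_simps mod_add_left_eq mod_add_right_eq add.commute)
qed

lemma Zm_ord_quotient:
  assumes N: "N > 0" and m: "m dvd N"
  shows "group.ord (Zm N) ((N div m) mod N) = m"
proof -
  interpret comm_group "Zm N" by (rule Zm_cg[OF N])
  obtain d where d: "N = m * d" using m by (elim dvdE)
  have d0: "d \<noteq> 0" and m0: "m \<noteq> 0" using d N by auto
  have key: "ord ((N div m) mod N) dvd k \<longleftrightarrow> m dvd k" for k
  proof -
    have "ord ((N div m) mod N) dvd k \<longleftrightarrow> (k * ((N div m) mod N)) mod N = 0"
      using pow_eq_id[of "(N div m) mod N" k] N by (simp add: Zm_pow[OF N] Zm_simps)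
    also have "\<dots> \<longleftrightarrow> (k * d) mod (m * d) = 0" using d m0 by (simp add: mod_mult_right_eq)
    also have "\<dots> \<longleftrightarrow> m dvd k" using d0 by (simp add: mod_eq_0_iff_dvd)
    finally show ?thesis .
  qed
  show ?thesis using key[of "ord ((N div m) mod N)"] key[of m] by (simp add: dvd_antisym)
qed

section \<open>Sums of generators modulo \<open>L\<close>\<close>

inductive_set mod_sums :: "nat \<Rightarrow> nat set \<Rightarrow> nat set" for L :: nat and A :: "nat set" where
  zero: "0 \<in> mod_sums L A"
| add_gen: "x \<in> mod_sums L A \<Longrightarrow> a \<in> A \<Longrightarrow> (x + a) mod L \<in> mod_sums L A"

lemma mod_sums_lt:
  assumes "L > 0" and "y \<in> mod_sums L A"
  shows "y < L"
  using assms(2) by induction (simp_all add: assms(1))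

lemma mod_sums_add:
  assumes L: "L > 0" and y: "y \<in> mod_sums L A" and z: "z \<in> mod_sums L A"
  shows "(y + z) mod L \<in> mod_sums L A"
  using z
proof induction
  case zero then show ?case using y mod_sums_lt[OF L y] by simp
next
  case (add_gen z a)
  have "(y + (z + a) mod L) mod L = ((y + z) mod L + a) mod L"
    by (simp add: mod_add_left_eq mod_add_right_eq add.assoc)
  then show ?case using mod_sums.add_gen[OF add_gen.IH add_gen.hyps(2)] by simp
qed

lemma mod_sums_mult:
  assumes L: "L > 0" and y: "y \<in> mod_sums L A"
  shows "(k * y) mod L \<in> mod_sums L A"
proof (induction k)
  case (Suc k)
  have "(Suc k * y) mod L = ((k * y) mod L + y) mod L"
    by (simp add: mod_add_left_eq mod_add_right_eq add.commute)
  then show ?case using mod_sums_add[OF L Suc y] by simp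
qed (simp add: mod_sums.zero)

text \<open>The least positive element \<open>s\<close> of \<open>mod_sums L A \<union> {L}\<close> divides \<open>L\<close> and every
  element of \<open>mod_sums L A\<close>: the remainders of the division by \<open>s\<close> are again reachable.\<close>
locale least_mod_sum =
  fixes L :: nat and A :: "nat set" and s :: nat
  assumes L_pos: "L > 0"
    and s_pos: "0 < s" and s_mem: "s \<in> mod_sums L A \<or> s = L"
    and s_least: "\<And>t. 0 < t \<Longrightarrow> t < s \<Longrightarrow> t \<notin> mod_sums L A"
begin

lemma s_le: "s \<le> L"
  using s_mem mod_sums_lt[OF L_pos] by fastforce

lemma dvd_elem:
  assumes y: "y \<in> mod_sums L A"
  shows "s dvd y"
proof (cases "s = L")
  case True
  then show ?thesis using mod_sums_lt[OF L_pos y] s_least[of y] y by fastforce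
next
  case False
  then have sS: "s \<in> mod_sums L A" using s_mem by simp
  define q r where "q = y div s" and "r = y mod s"
  obtain L' where L': "L = Suc L'" using L_pos gr0_implies_Suc by blast
  have "y + q * (L - 1) * s = r + q * s * L"
    unfolding q_def r_def L' by (simp add: algebra_simps)
  then have "(y + (q * (L - 1) * s) mod L) mod L = r mod L" by (simp add: mod_add_right_eq)
  moreover have "r < s" unfolding r_def using s_pos by simp
  ultimately have "(y + (q * (L - 1) * s) mod L) mod L = r" using s_le by simp
  moreover have "(y + (q * (L - 1) * s) mod L) mod L \<in> mod_sums L A"
    using mod_sums_add[OF L_pos y mod_sums_mult[OF L_pos sS, of "q * (L - 1)"]] by (simp add: mult.assoc)
  ultimately have "r = 0" using s_least[of r] s_pos unfolding r_def by auto
  then show ?thesis unfolding r_def by (simp add: mod_eq_0_iff_dvd)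
qed

lemma dvd_L: "s dvd L"
proof (rule ccontr)
  assume nd: "\<not> s dvd L"
  then have sS: "s \<in> mod_sums L A" using s_mem by auto
  define r where "r = L mod s"
  have r: "0 < r" "r < s" using nd s_pos unfolding r_def by (auto intro: gr0I simp: mod_eq_0_iff_dvd)
  have "(L div s + 1) * s = L - r + s" unfolding r_def
    by (metis add_diff_cancel_right' div_mult_mod_eq mult_Suc Suc_eq_plus1 add.commute)
  also have "\<dots> = L + (s - r)" using r s_le by simp
  finally have "((L div s + 1) * s) mod L = (s - r) mod L" by simp
  also have "\<dots> = s - r" using s_le r by (intro mod_less) linarith
  finally have "((L div s + 1) * s) mod L = s - r" .
  then have "s - r \<in> mod_sums L A" using mod_sums_mult[OF L_pos sS, of "L div s + 1"] by simp
  then show False using s_least[of "s - r"] r by simp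
qed

end

text \<open>If \<open>L\<close> is the lcm of a finite set \<open>Ms\<close> of positive integers, the quotients
  \<open>L/m\<close>, \<open>m \<in> Ms\<close>, generate all of \<open>Z/L\<close>: the least positive sum \<open>s\<close> satisfies
  \<open>m | L/s\<close> for every \<open>m\<close>, so \<open>L | L/s\<close> and \<open>s = 1\<close>.\<close>
lemma mod_sums_lcm:
  assumes fin: "finite Ms" and nz: "0 \<notin> Ms" and L_def: "L = Lcm Ms" and x: "x < L"
  shows "x \<in> mod_sums L ((\<lambda>m. L div m) ` Ms)"
proof -
  let ?S = "mod_sums L ((\<lambda>m. L div m) ` Ms)"
  have L0: "L > 0" using Lcm_0_iff[OF fin] nz L_def by auto
  define s where "s = (LEAST s. 0 < s \<and> (s \<in> ?S \<or> s = L))"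
  have sP: "0 < s \<and> (s \<in> ?S \<or> s = L)" unfolding s_def by (rule LeastI[of _ L]) (simp add: L0)
  interpret least_mod_sum L "(\<lambda>m. L div m) ` Ms" s
    using L0 sP not_less_Least[of _ "\<lambda>s. 0 < s \<and> (s \<in> ?S \<or> s = L)"]
    unfolding s_def by unfold_locales auto
  have "m dvd L div s" if m: "m \<in> Ms" for m
  proof -
    have mL: "m dvd L" using dvd_Lcm[OF m] L_def by simp
    have "(0 + L div m) mod L \<in> ?S" using m by (blast intro: mod_sums.intros)
    then have "s dvd (L div m) mod L" using dvd_elem by simp
    moreover have "(L div m) mod L = L div m" if "m \<noteq> 1"
    proof -
      have "1 < m" using m nz that by (cases m) auto
      then show ?thesis using L0 by (simp add: div_less_dividend)
    qed
    ultimately have "s dvd L div m" using dvd_L by (cases "m = 1") auto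
    then obtain t where "L div m = s * t" by (elim dvdE)
    then have "L = s * (m * t)" using mL by (metis dvd_mult_div_cancel mult.left_commute)
    then show ?thesis using s_pos by simp
  qed
  then have "L dvd L div s" using L_def by (simp add: Lcm_least)
  moreover have "L div s > 0" using dvd_L s_le s_pos by (simp add: div_greater_zero_iff)
  ultimately have "s = 1" using L0 s_pos div_less_dividend[of s L] dvd_imp_le by fastforce
  then have "1 \<in> ?S \<or> L = 1" using sP by auto
  then show ?thesis using x mod_sums_mult[OF L0, of 1 _ x] by (auto intro: mod_sums.zero)
qed

section \<open>Construction A: killing the multiplicities\<close>

context bgraph begin

definition mult_lcm :: nat where
  "mult_lcm = Lcm (bg_mult \<Gamma> ` VS)"

definition rep :: "'v \<Rightarrow> 'h" where
  "rep \<mu> = (SOME h. h \<in> AT \<mu>)"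

definition kill_weight :: "'h \<Rightarrow> nat" where
  "kill_weight h = (if h = rep (vt h) then (mult_lcm div bg_mult \<Gamma> (vt h)) mod mult_lcm else 0)"

lemma mults_nonzero: "0 \<notin> bg_mult \<Gamma> ` VS"
  using mult_ge1 by fastforce

lemma mult_lcm_pos: "mult_lcm > 0"
proof -
  have "Lcm (bg_mult \<Gamma> ` VS) \<noteq> 0"
    using Lcm_0_iff[OF finite_imageI[OF fin_verts, of "bg_mult \<Gamma>"]] mults_nonzero by simp
  then show ?thesis unfolding mult_lcm_def by simp
qed

lemma mult_dvd_lcm: "\<mu> \<in> VS \<Longrightarrow> bg_mult \<Gamma> \<mu> dvd mult_lcm"
  unfolding mult_lcm_def by (rule dvd_Lcm) simp

lemma rep_at: "\<mu> \<in> VS \<Longrightarrow> rep \<mu> \<in> AT \<mu>"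
  unfolding rep_def using at_ne by (simp add: some_in_eq)

lemma kill_omega:
  assumes \<mu>: "\<mu> \<in> VS"
  shows "sw_omega \<Gamma> (Zm mult_lcm) kill_weight \<mu> = (mult_lcm div bg_mult \<Gamma> \<mu>) mod mult_lcm"
proof -
  interpret Z: comm_group "Zm mult_lcm" by (rule Zm_cg[OF mult_lcm_pos])
  let ?a = "(mult_lcm div bg_mult \<Gamma> \<mu>) mod mult_lcm"
  have "sw_omega \<Gamma> (Zm mult_lcm) kill_weight \<mu>
          = finprod (Zm mult_lcm) (\<lambda>h. if rep \<mu> = h then ?a else \<one>\<^bsub>Zm mult_lcm\<^esub>) (AT \<mu>)"
    unfolding sw_omega_def using mult_lcm_pos
    by (intro Z.finprod_cong') (auto simp: kill_weight_def at_iff Zm_simps Pi_def)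
  also have "\<dots> = ?a"
    using Z.finprod_singleton[of "rep \<mu>" "AT \<mu>" "\<lambda>_. ?a"] rep_at[OF \<mu>] finite_at mult_lcm_pos
    by (simp add: Pi_def Zm_simps)
  finally show ?thesis .
qed

lemma kill_ord: "\<mu> \<in> VS \<Longrightarrow> sw_ord \<Gamma> (Zm mult_lcm) kill_weight \<mu> = bg_mult \<Gamma> \<mu>"
  unfolding sw_ord_def by (simp add: kill_omega Zm_ord_quotient mult_lcm_pos mult_dvd_lcm)

text \<open>Every weight is \<open>0\<close> or equal to \<open>\<omega>\<^sub>\<mu>\<close>, so the zero potential works.\<close>
lemma kill_cov: "cov \<Gamma> (Zm mult_lcm) kill_weight (\<lambda>_. 0)"
proof -
  interpret Z: comm_group "Zm mult_lcm" by (rule Zm_cg[OF mult_lcm_pos])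
  have Wc: "kill_weight h \<in> carrier (Zm mult_lcm)" for h
    using mult_lcm_pos by (simp add: kill_weight_def Zm_simps)
  have "kill_weight h \<in> sw_H \<Gamma> (Zm mult_lcm) kill_weight (vt h)" if h: "h \<in> HF" for h
  proof (cases "h = rep (vt h)")
    case True
    then have "kill_weight h = sw_omega \<Gamma> (Zm mult_lcm) kill_weight (vt h)"
      using kill_omega[OF vtx_in[OF h]] by (simp add: kill_weight_def)
    then show ?thesis unfolding sw_H_def by (simp add: generate.incl)
  next
    case False
    then show ?thesis unfolding sw_H_def using generate.one[of "Zm mult_lcm"]
      by (simp add: kill_weight_def Zm_simps)
  qed
  moreover have "inv\<^bsub>Zm mult_lcm\<^esub> 0 = 0" using Z.inv_one by (simp add: Zm_simps)
  ultimately show ?thesis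
    using Wc mult_lcm_pos by unfold_locales (simp_all add: Zm_cg Zm_simps bg)
qed

sublocale kill: cov \<Gamma> "Zm mult_lcm" kill_weight "\<lambda>_. 0"
  by (rule kill_cov)

text \<open>The potential is constant, so every path of the base graph lifts at any level.\<close>
lemma kill_lift:
  assumes "h \<in> HF" "h' \<in> HF" "l < mult_lcm"
  shows "(kill.V h l, kill.V h' l) \<in> kill.EEC\<^sup>*"
  using kill.lift_vertices[of HF h h' l] assms conn by (simp add: Zm_simps)

text \<open>Passing through \<open>rep \<nu>\<close> raises the level by \<open>L/m(\<nu>)\<close>.\<close>
lemma kill_step:
  assumes h0: "h0 \<in> HF" and x: "x < mult_lcm" and \<nu>: "\<nu> \<in> VS"
  shows "(kill.V h0 x, kill.V h0 ((x + mult_lcm div bg_mult \<Gamma> \<nu>) mod mult_lcm)) \<in> kill.EEC\<^sup>*"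
proof -
  let ?a = "(mult_lcm div bg_mult \<Gamma> \<nu>) mod mult_lcm"
  let ?y = "(x + mult_lcm div bg_mult \<Gamma> \<nu>) mod mult_lcm"
  have r: "rep \<nu> \<in> HF" "vt (rep \<nu>) = \<nu>" using rep_at[OF \<nu>] by (auto simp: at_iff)
  have "?a \<in> kill.HH \<nu>" unfolding sw_H_def using kill_omega[OF \<nu>] generate.incl by fastforce
  then have "kill.V (rep \<nu>) (x \<otimes>\<^bsub>Zm mult_lcm\<^esub> ?a) = kill.V (rep \<nu>) x"
    using kill.V_coset[of "rep \<nu>" x ?a] r x by (simp add: Zm_simps)
  then have same: "kill.V (rep \<nu>) ?y = kill.V (rep \<nu>) x" by (simp add: Zm_simps mod_add_right_eq)
  have "(kill.V h0 x, kill.V (rep \<nu>) x) \<in> kill.EEC\<^sup>*" using kill_lift h0 r x by simp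
  also have "(kill.V (rep \<nu>) x, kill.V h0 ?y) \<in> kill.EEC\<^sup>*"
    using kill_lift[of "rep \<nu>" h0 ?y] h0 r mult_lcm_pos same by simp
  finally show ?thesis .
qed

text \<open>All levels are reachable because the quotients \<open>L/m(\<nu>)\<close> generate \<open>Z/L\<close>.\<close>
lemma kill_levels:
  assumes h0: "h0 \<in> HF" and y: "y < mult_lcm"
  shows "(kill.V h0 0, kill.V h0 y) \<in> kill.EEC\<^sup>*"
proof -
  have "y \<in> mod_sums mult_lcm ((\<lambda>m. mult_lcm div m) ` bg_mult \<Gamma> ` VS)"
    by (rule mod_sums_lcm[OF finite_imageI[OF fin_verts] mults_nonzero mult_lcm_def y])
  then show ?thesis
  proof induction
    case (add_gen x a)
    then obtain \<nu> where "\<nu> \<in> VS" "a = mult_lcm div bg_mult \<Gamma> \<nu>" by blast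
    then show ?case
      using rtrancl_trans[OF add_gen.IH kill_step[OF h0 mod_sums_lt[OF mult_lcm_pos add_gen.hyps(1)]]]
      by simp
  qed simp
qed

end

lemma multiplicity_killing:
  fixes \<Gamma> :: "('v, 'h, 'k::field) qbg"
  assumes q: "quantized_brauer_graph \<Gamma>"
  shows "\<exists>(G::nat monoid) W. tower_step \<Gamma> G W \<and>
           (\<forall>\<mu> \<in> bg_verts (bg_cover \<Gamma> G W). bg_mult (bg_cover \<Gamma> G W) \<mu> = 1)"
proof -
  interpret bgraph \<Gamma> using q unfolding quantized_brauer_graph_def bgraph_def by simp
  obtain h0 where h0: "h0 \<in> HF" using half_ne by blast
  have bw: "sw_ord \<Gamma> (Zm mult_lcm) kill_weight \<mu> dvd bg_mult \<Gamma> \<mu>" if "\<mu> \<in> VS" for \<mu>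
    using kill_ord[OF that] by simp
  have "brauer_graph kill.CV"
  proof (rule kill.cover_brauer[OF bw])
    fix x assume "x \<in> bg_half kill.CV"
    then show "(kill.V h0 0, bg_vtx kill.CV x) \<in> kill.EEC\<^sup>*"
      using kill.cover_connected[of HF h0 x] h0 conn kill_levels by (simp add: Zm_simps)
  qed
  then show ?thesis
    using cover_tower_step[OF kill_cov q bw] kill.cover_mult_one[OF kill_ord] by blast
qed

section \<open>A spanning subgraph without loops and multiple edges\<close>

context bgraph begin

definition spanning :: "'h set \<Rightarrow> bool" where
  "spanning S \<longleftrightarrow> S \<subseteq> HF \<and> (\<forall>x\<in>S. mt x \<in> S) \<and> (\<forall>\<mu>\<in>VS. \<forall>\<nu>\<in>VS. (\<mu>, \<nu>) \<in> (adj S)\<^sup>*)"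

lemma mate_inj: "x \<in> HF \<Longrightarrow> y \<in> HF \<Longrightarrow> mt x = mt y \<Longrightarrow> x = y"
  using mate_mate by metis

lemma spanning_remove:
  assumes T: "spanning T" and x: "x \<in> T" and sub: "adj T - Id \<subseteq> adj (T - {x, mt x})"
  shows "spanning (T - {x, mt x})"
  unfolding spanning_def
proof (intro conjI ballI)
  show "T - {x, mt x} \<subseteq> HF" using T unfolding spanning_def by auto
next
  fix y assume y: "y \<in> T - {x, mt x}"
  have yH: "y \<in> HF" "x \<in> HF" "mt y \<in> T" using x y T unfolding spanning_def by auto
  have "mt y \<noteq> x"
  proof
    assume "mt y = x"
    then have "y = mt x" using mate_mate yH by metis
    then show False using y by simp
  qed
  moreover have "mt y \<noteq> mt x" using mate_inj[OF yH(1,2)] y by blast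
  ultimately show "mt y \<in> T - {x, mt x}" using yH by simp
next
  fix \<mu> \<nu> assume "\<mu> \<in> VS" "\<nu> \<in> VS"
  then have "(\<mu>, \<nu>) \<in> (adj T - Id)\<^sup>*" unfolding rtrancl_r_diff_Id using T spanning_def by simp
  then show "(\<mu>, \<nu>) \<in> (adj (T - {x, mt x}))\<^sup>*" using rtrancl_mono[OF sub] by blast
qed

lemma min_spanning_irredundant:
  assumes T: "spanning T" and min: "\<And>S. spanning S \<Longrightarrow> card T \<le> card S" and x: "x \<in> T"
  shows "\<not> adj T - Id \<subseteq> adj (T - {x, mt x})"
proof
  assume "adj T - Id \<subseteq> adj (T - {x, mt x})"
  then have "card T \<le> card (T - {x, mt x})" using min spanning_remove T x by blast
  moreover have "finite T" using T fin_half finite_subset unfolding spanning_def by blast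
  then have "card (T - {x, mt x}) < card T" using x by (intro psubset_card_mono) auto
  ultimately show False by simp
qed

text \<open>A loop is always redundant, and of two parallel edges each is redundant; so a
  minimal spanning set has neither.\<close>
lemma min_spanning_loopfree:
  assumes T: "spanning T" and min: "\<And>S. spanning S \<Longrightarrow> card T \<le> card S" and h: "h \<in> T"
  shows "vt (mt h) \<noteq> vt h"
proof
  assume l: "vt (mt h) = vt h"
  have hH: "h \<in> HF" using h T unfolding spanning_def by auto
  have "adj T - Id \<subseteq> adj (T - {h, mt h})"
  proof
    fix p assume "p \<in> adj T - Id"
    then obtain y where y: "y \<in> T" "p = (vt y, vt (mt y))" "vt y \<noteq> vt (mt y)"
      unfolding adj_def by auto
    have "y \<noteq> h" "y \<noteq> mt h" using y l mate_mate hH by auto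
    then show "p \<in> adj (T - {h, mt h})" using y unfolding adj_def by blast
  qed
  then show False using min_spanning_irredundant[OF T min h] by blast
qed

lemma min_spanning_simple:
  assumes T: "spanning T" and min: "\<And>S. spanning S \<Longrightarrow> card T \<le> card S"
    and h: "h \<in> T" and h': "h' \<in> T" and ep: "bg_endpoints \<Gamma> h = bg_endpoints \<Gamma> h'"
  shows "bg_edge \<Gamma> h = bg_edge \<Gamma> h'"
proof (rule ccontr)
  assume ne: "bg_edge \<Gamma> h \<noteq> bg_edge \<Gamma> h'"
  have hH: "h \<in> HF" "h' \<in> HF" using h h' T unfolding spanning_def by auto
  have other: "h \<notin> {h', mt h'}" "mt h \<notin> {h', mt h'}"
    using ne edge_eq_iff[OF hH] edge_eq_iff[OF hH(2,1)] mate_mate hH mate_inj mate_in by auto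
  have S: "h \<in> T - {h', mt h'}" "mt h \<in> T - {h', mt h'}"
    using h T other unfolding spanning_def by auto
  have e: "(vt h, vt (mt h)) \<in> adj (T - {h', mt h'})" "(vt (mt h), vt h) \<in> adj (T - {h', mt h'})"
    using S mate_mate[OF hH(1)] unfolding adj_def by (metis (mono_tags, lifting) mem_Collect_eq)+
  have "adj T - Id \<subseteq> adj (T - {h', mt h'})"
  proof
    fix p assume "p \<in> adj T - Id"
    then obtain y where y: "y \<in> T" "p = (vt y, vt (mt y))" unfolding adj_def by auto
    show "p \<in> adj (T - {h', mt h'})"
    proof (cases "y = h' \<or> y = mt h'")
      case True
      then have "p = (vt h', vt (mt h')) \<or> p = (vt (mt h'), vt h')" using y mate_mate hH by auto
      then show ?thesis using e ep unfolding bg_endpoints_def by (auto simp: doubleton_eq_iff)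
    qed (use y in \<open>auto simp: adj_def\<close>)
  qed
  then show False using min_spanning_irredundant[OF T min h'] by blast
qed

end

locale simple_spanning = bgraph \<Gamma> for \<Gamma> :: "('v, 'h, 'k) qbg" +
  fixes T :: "'h set"
  assumes T_sub: "T \<subseteq> HF"
    and T_mate: "x \<in> T \<Longrightarrow> mt x \<in> T"
    and T_conn: "\<mu> \<in> VS \<Longrightarrow> \<nu> \<in> VS \<Longrightarrow> (\<mu>, \<nu>) \<in> (adj T)\<^sup>*"
    and T_loopfree: "h \<in> T \<Longrightarrow> vt (mt h) \<noteq> vt h"
    and T_simple: "h \<in> T \<Longrightarrow> h' \<in> T \<Longrightarrow> bg_endpoints \<Gamma> h = bg_endpoints \<Gamma> h'
                     \<Longrightarrow> bg_edge \<Gamma> h = bg_edge \<Gamma> h'"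

lemma (in bgraph) simple_spanning_exists: "\<exists>T. simple_spanning \<Gamma> T"
proof -
  have "spanning HF" using mate_in conn unfolding spanning_def by auto
  then obtain T where T: "spanning T" and min: "\<And>S. spanning S \<Longrightarrow> card T \<le> card S"
    using ex_has_least_nat[of spanning HF card] by blast
  have "simple_spanning \<Gamma> T"
    using T min_spanning_loopfree[OF T min] min_spanning_simple[OF T min] bg
    unfolding simple_spanning_def simple_spanning_axioms_def spanning_def bgraph_def by blast
  then show ?thesis by blast
qed

section \<open>Construction B: separating potentials\<close>

context simple_spanning begin

lemma nonT_mate: "x \<in> HF \<Longrightarrow> x \<notin> T \<Longrightarrow> mt x \<notin> T"
  using T_mate mate_mate by metis

definition pot :: "('h \<Rightarrow> nat) \<Rightarrow> 'h \<Rightarrow> 'h \<Rightarrow> nat" where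
  "pot idx h1 x = (if x \<in> T then 0 else if x = h1 then 1 else if x = mt h1 then 0
      else if idx x < idx (mt x) then idx x + 2 else 0)"

lemma pot_alt:
  assumes idx: "inj_on idx HF" and h1: "h1 \<in> HF" and x: "x \<in> HF" "x \<notin> T"
  shows "pot idx h1 x = 0 \<longleftrightarrow> pot idx h1 (mt x) \<noteq> 0"
proof -
  have mx: "mt x \<notin> T" "mt x \<in> HF" "mt (mt x) = x" using nonT_mate mate_in mate_mate x by auto
  consider "x = h1" | "x = mt h1" | "x \<noteq> h1" "x \<noteq> mt h1" by blast
  then show ?thesis
  proof cases
    case 1 then show ?thesis using x mx mate_neq unfolding pot_def by simp
  next
    case 2 then show ?thesis using x mx h1 mate_mate mate_neq unfolding pot_def by auto
  next
    case 3
    have "mt x \<noteq> h1" using 3 mx(3) by metis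
    moreover have "mt x \<noteq> mt h1" using 3 mate_inj[OF x(1) h1] by blast
    moreover have "idx x \<noteq> idx (mt x)" using inj_onD[OF idx] x mx mate_neq by metis
    ultimately show ?thesis using 3 x mx unfolding pot_def by auto
  qed
qed

lemma pot_inj:
  assumes idx: "inj_on idx HF" and x: "x \<in> HF" "x \<notin> T" and y: "y \<in> HF" "y \<notin> T"
    and e: "pot idx h1 x = pot idx h1 y" and nz: "pot idx h1 x \<noteq> 0"
  shows "x = y"
proof (cases "x = h1")
  case True
  then show ?thesis using e x y unfolding pot_def by (auto split: if_splits)
next
  case False
  then have "pot idx h1 x = idx x + 2" using x nz unfolding pot_def by (auto split: if_splits)
  moreover have "y \<noteq> h1 \<and> pot idx h1 y = idx y + 2"
    using e nz y calculation unfolding pot_def by (auto split: if_splits)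
  ultimately show ?thesis using e inj_onD[OF idx] x y by simp
qed

lemma pot_bound: "pot idx h1 x \<le> idx x + 2"
  unfolding pot_def by simp

end

locale separated = simple_spanning \<Gamma> T for \<Gamma> :: "('v, 'h, 'k) qbg" and T +
  fixes c :: "'h \<Rightarrow> nat" and N :: nat
  assumes c_T: "x \<in> T \<Longrightarrow> c x = 0"
    and c_alt: "x \<in> HF \<Longrightarrow> x \<notin> T \<Longrightarrow> c x = 0 \<longleftrightarrow> c (mt x) \<noteq> 0"
    and c_inj: "x \<in> HF \<Longrightarrow> x \<notin> T \<Longrightarrow> y \<in> HF \<Longrightarrow> y \<notin> T \<Longrightarrow> c x = c y \<Longrightarrow> c x \<noteq> 0 \<Longrightarrow> x = y"
    and c_bound: "x \<in> HF \<Longrightarrow> y \<in> HF \<Longrightarrow> c x + c y < N"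
    and c_unit: "N = 1 \<or> (\<exists>h1 \<in> HF. c h1 = 1 \<and> c (mt h1) = 0)"

lemma (in simple_spanning) separated_exists: "\<exists>c N. separated \<Gamma> T c N"
proof -
  obtain idx :: "'h \<Rightarrow> nat" and n where idx: "idx ` HF = {i. i < n}" "inj_on idx HF"
    using finite_imp_inj_to_nat_seg[OF fin_half] by blast
  show ?thesis
  proof (cases "HF \<subseteq> T")
    case True
    then have "separated \<Gamma> T (\<lambda>_. 0) 1" by unfold_locales auto
    then show ?thesis by blast
  next
    case False
    then obtain h1 where h1: "h1 \<in> HF" "h1 \<notin> T" by blast
    have "separated \<Gamma> T (pot idx h1) (2 * n + 5)"
    proof (intro separated.intro separated_axioms.intro)
      show "simple_spanning \<Gamma> T" by unfold_locales
      show "pot idx h1 x = 0" if "x \<in> T" for x using that by (simp add: pot_def)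
      show "pot idx h1 x = 0 \<longleftrightarrow> pot idx h1 (mt x) \<noteq> 0" if "x \<in> HF" "x \<notin> T" for x
        by (rule pot_alt[OF idx(2) h1(1) that])
      show "x = y" if "x \<in> HF" "x \<notin> T" "y \<in> HF" "y \<notin> T" "pot idx h1 x = pot idx h1 y"
        "pot idx h1 x \<noteq> 0" for x y
        using pot_inj[OF idx(2)] that by blast
      show "pot idx h1 x + pot idx h1 y < 2 * n + 5" if "x \<in> HF" "y \<in> HF" for x y
      proof -
        have "idx x < n" "idx y < n" using idx(1) that by auto
        then show ?thesis using pot_bound[of idx h1 x] pot_bound[of idx h1 y] by linarith
      qed
      have "pot idx h1 h1 = 1" "pot idx h1 (mt h1) = 0"
        using h1 mate_neq nonT_mate unfolding pot_def by auto
      then show "2 * n + 5 = 1 \<or> (\<exists>h \<in> HF. pot idx h1 h = 1 \<and> pot idx h1 (mt h) = 0)"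
        using h1 by blast
    qed
    then show ?thesis by blast
  qed
qed

context separated begin

abbreviation "ZN \<equiv> Zm N"

definition sep_weight :: "'h \<Rightarrow> nat" where
  "sep_weight x = c (sc x) \<otimes>\<^bsub>ZN\<^esub> inv\<^bsub>ZN\<^esub> c x"

text \<open>Since \<open>c x + c y < N\<close>, potentials are group elements and their sums are computed
  without reduction modulo \<open>N\<close>.\<close>
lemma N_pos: "N > 0"
  using c_bound half_ne by fastforce

lemma c_carrier: "x \<in> HF \<Longrightarrow> c x \<in> carrier ZN"
  using c_bound[of x x] by (simp add: Zm_simps)

lemma c_sum: "x \<in> HF \<Longrightarrow> y \<in> HF \<Longrightarrow> c x \<otimes>\<^bsub>ZN\<^esub> c y = c x + c y"
  using c_bound by (simp add: Zm_simps)

lemma sep_weight_potential: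
  assumes "x \<in> HF"
  shows "sep_weight x \<otimes>\<^bsub>ZN\<^esub> c x = c (sc x)"
proof -
  interpret Z: comm_group ZN by (rule Zm_cg[OF N_pos])
  show ?thesis using assms using c_carrier succ_in by (simp add: sep_weight_def Z.m_assoc)
qed

lemma sep_cov: "cov \<Gamma> ZN sep_weight c"
proof -
  interpret Z: comm_group ZN by (rule Zm_cg[OF N_pos])
  show ?thesis
  proof unfold_locales
    fix h assume h: "h \<in> HF"
    then have "sep_weight h \<otimes>\<^bsub>ZN\<^esub> c h \<otimes>\<^bsub>ZN\<^esub> inv\<^bsub>ZN\<^esub> c (sc h) = \<one>\<^bsub>ZN\<^esub>"
      using sep_weight_potential c_carrier succ_in by simp
    then show "sep_weight h \<otimes>\<^bsub>ZN\<^esub> c h \<otimes>\<^bsub>ZN\<^esub> inv\<^bsub>ZN\<^esub> c (sc h) \<in> sw_H \<Gamma> ZN sep_weight (vt h)"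
      unfolding sw_H_def by (simp add: generate.one)
  qed (use bg N_pos c_carrier succ_in in \<open>simp_all add: Zm_cg Zm_simps sep_weight_def\<close>)
qed

sublocale sep: cov \<Gamma> ZN sep_weight c
  by (rule sep_cov)

text \<open>Around every vertex the coboundary telescopes: \<open>\<omega>\<^sub>\<mu> = 1\<close>.\<close>
lemma sep_omega: "sep.om \<mu> = \<one>\<^bsub>ZN\<^esub>"
proof -
  have sub: "AT \<mu> \<subseteq> HF" by (auto simp: at_iff)
  have Wc: "sep_weight x \<in> carrier ZN" if "x \<in> HF" for x using sep.Wc that .
  have "sep.om \<mu> \<otimes>\<^bsub>ZN\<^esub> finprod ZN c (AT \<mu>) = finprod ZN (\<lambda>x. sep_weight x \<otimes>\<^bsub>ZN\<^esub> c x) (AT \<mu>)"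
    unfolding sw_omega_def using sub Wc c_carrier by (subst sep.G.finprod_multf) (auto simp: Pi_def)
  also have "\<dots> = finprod ZN (\<lambda>x. c (sc x)) (AT \<mu>)"
    using sub sep_weight_potential by (intro sep.G.finprod_cong') (auto simp: Pi_def c_carrier succ_in)
  also have "\<dots> = finprod ZN c (sc ` AT \<mu>)"
    using sub c_carrier inj_on_subset[OF inj_succ sub]
    by (subst sep.G.finprod_reindex) (auto simp: Pi_def succ_in)
  also have "\<dots> = finprod ZN c (AT \<mu>)" by (simp add: succ_image_at)
  finally have e: "sep.om \<mu> \<otimes>\<^bsub>ZN\<^esub> finprod ZN c (AT \<mu>) = finprod ZN c (AT \<mu>)" .
  have "finprod ZN c (AT \<mu>) \<in> carrier ZN"
    using sub c_carrier by (intro sep.G.finprod_closed) (auto simp: Pi_def)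
  then show ?thesis using e sep.G.r_cancel_one[OF _ sep.omega_in] by simp
qed

lemma sep_ord: "sw_ord \<Gamma> ZN sep_weight \<mu> = 1"
  unfolding sw_ord_def using sep_omega by simp

text \<open>Since \<open>H\<^sub>\<mu>\<close> is trivial, the vertex of a lift is determined by its base vertex and
  its level \<open>g - c h\<close>.\<close>
lemma sep_V_eq:
  assumes "h \<in> HF" "h' \<in> HF" "g \<in> carrier ZN" "g' \<in> carrier ZN"
  shows "sep.V h g = sep.V h' g' \<longleftrightarrow>
           vt h = vt h' \<and> g \<otimes>\<^bsub>ZN\<^esub> inv\<^bsub>ZN\<^esub> c h = g' \<otimes>\<^bsub>ZN\<^esub> inv\<^bsub>ZN\<^esub> c h'"
proof -
  have "sep.HH \<mu> = {\<one>\<^bsub>ZN\<^esub>}" for \<mu> using sep.HH_pow[of \<mu>] sep_omega by simp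
  moreover have "{\<one>\<^bsub>ZN\<^esub>} #>\<^bsub>ZN\<^esub> x = {x}" if "x \<in> carrier ZN" for x
    using that unfolding r_coset_def by simp
  ultimately show ?thesis using sep.V_eq[OF assms] assms c_carrier by simp
qed

text \<open>The potential vanishes on \<open>T\<close>, so paths in \<open>T\<close> lift at any level.\<close>
lemma sep_lift:
  assumes "h \<in> HF" "h' \<in> HF" "l \<in> carrier ZN"
  shows "(sep.V h (l \<otimes>\<^bsub>ZN\<^esub> c h), sep.V h' (l \<otimes>\<^bsub>ZN\<^esub> c h')) \<in> sep.EEC\<^sup>*"
  using sep.lift_vertices[OF T_sub _ T_conn assms] c_T T_mate by simp

text \<open>Crossing the edge of \<open>h\<^sub>1\<close> raises the level by \<open>1\<close>, so all levels are reachable.\<close>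
lemma sep_levels:
  assumes h0: "h0 \<in> HF" and l: "l \<in> carrier ZN"
  shows "(sep.V h0 (c h0), sep.V h0 (l \<otimes>\<^bsub>ZN\<^esub> c h0)) \<in> sep.EEC\<^sup>*"
proof (cases "N = 1")
  case True
  then show ?thesis using l c_carrier h0 by (simp add: Zm_simps)
next
  case False
  then obtain h1 where h1: "h1 \<in> HF" "c h1 = 1" "c (mt h1) = 0" using c_unit by blast
  have mh1: "mt h1 \<in> HF" using mate_in h1 by simp
  have "(sep.V h0 ((k mod N) \<otimes>\<^bsub>ZN\<^esub> c h0), sep.V h0 ((Suc k mod N) \<otimes>\<^bsub>ZN\<^esub> c h0)) \<in> sep.EEC\<^sup>*" for k
  proof -
    let ?l = "k mod N" and ?l' = "Suc k mod N"
    have lc: "?l \<in> carrier ZN" "?l' \<in> carrier ZN" using N_pos by (simp_all add: Zm_simps)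
    have step: "?l \<otimes>\<^bsub>ZN\<^esub> c h1 = ?l' \<otimes>\<^bsub>ZN\<^esub> c (mt h1)"
      using h1 N_pos by (simp add: Zm_simps mod_Suc_eq)
    have "(sep.V h0 (?l \<otimes>\<^bsub>ZN\<^esub> c h0), sep.V h1 (?l \<otimes>\<^bsub>ZN\<^esub> c h1)) \<in> sep.EEC\<^sup>*"
      by (rule sep_lift[OF h0 h1(1) lc(1)])
    also have "(sep.V h1 (?l \<otimes>\<^bsub>ZN\<^esub> c h1), sep.V (mt h1) (?l' \<otimes>\<^bsub>ZN\<^esub> c (mt h1))) \<in> sep.EEC"
      unfolding step[symmetric] using lc c_carrier h1(1) by (intro sep.cover_edge sep.G.m_closed) auto
    also have "(sep.V (mt h1) (?l' \<otimes>\<^bsub>ZN\<^esub> c (mt h1)), sep.V h0 (?l' \<otimes>\<^bsub>ZN\<^esub> c h0)) \<in> sep.EEC\<^sup>*"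
      by (rule sep_lift[OF mh1 h0 lc(2)])
    finally show ?thesis .
  qed
  then have "(sep.V h0 (0 \<otimes>\<^bsub>ZN\<^esub> c h0), sep.V h0 ((k mod N) \<otimes>\<^bsub>ZN\<^esub> c h0)) \<in> sep.EEC\<^sup>*" for k
    by (induction k) (auto intro: rtrancl_trans)
  from this[of l] show ?thesis using l c_carrier h0 N_pos by (simp add: Zm_simps)
qed

text \<open>A loop would need an edge of voltage zero with both ends at one vertex.\<close>
lemma sep_no_loop: "\<not> has_loop sep.CV"
proof
  assume "has_loop sep.CV"
  then obtain h g where hg: "h \<in> HF" "g \<in> carrier ZN" "sep.V (mt h) g = sep.V h g"
    unfolding has_loop_def by (auto simp: sep.CV_half sep.CV_vtx sep.CV_mate)
  then have v: "vt (mt h) = vt h"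
    and "g \<otimes>\<^bsub>ZN\<^esub> inv\<^bsub>ZN\<^esub> c (mt h) = g \<otimes>\<^bsub>ZN\<^esub> inv\<^bsub>ZN\<^esub> c h"
    using sep_V_eq[OF mate_in[OF hg(1)] hg(1) hg(2) hg(2)] by auto
  then have "c (mt h) = c h"
    using sep.G.inv_cancel_left hg c_carrier mate_in by blast
  then show False using T_loopfree[of h] v c_alt[OF hg(1)] by (cases "h \<in> T") auto
qed

lemma nonT_voltage_inj:
  assumes x: "x \<in> HF" "x \<notin> T" and y: "y \<in> HF" "y \<notin> T"
    and ns: "c x + c (mt y) = c y + c (mt x)"
  shows "x = y"
proof -
  have m: "mt x \<in> HF" "mt x \<notin> T" "mt y \<in> HF" "mt y \<notin> T"
    using x y mate_in nonT_mate by auto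
  show ?thesis
  proof (cases "c x = 0")
    case False
    have mx: "c (mt x) = 0" using c_alt[OF x] False by simp
    then have "c y \<noteq> 0" using ns False by auto
    then have "c (mt y) = 0" using c_alt[OF y] by simp
    then show ?thesis using c_inj[OF x y] ns False mx by simp
  next
    case True
    have mx: "c (mt x) \<noteq> 0" using c_alt[OF x] True by simp
    have "c y = 0" using ns True mx c_alt[OF y] by (cases "c y = 0") auto
    then have "c (mt y) \<noteq> 0" using c_alt[OF y] by simp
    then have "mt x = mt y" using c_inj[OF m] ns True \<open>c y = 0\<close> by simp
    then show ?thesis using mate_inj x y by blast
  qed
qed

lemma voltage_determines_edge:
  assumes x: "x \<in> HF" and y: "y \<in> HF" and v: "vt x = vt y" "vt (mt x) = vt (mt y)"
    and ns: "c x + c (mt y) = c y + c (mt x)"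
  shows "y = x \<or> (y = mt x \<and> c y = c x)"
proof (cases "x \<in> T"; cases "y \<in> T")
  assume "x \<in> T" "y \<in> T"
  moreover have "bg_endpoints \<Gamma> x = bg_endpoints \<Gamma> y" unfolding bg_endpoints_def using v by simp
  ultimately have "bg_edge \<Gamma> x = bg_edge \<Gamma> y" by (rule T_simple)
  then have "y = x \<or> y = mt x" using edge_eq_iff[OF x y] by blast
  moreover have "c y = c x" using c_T \<open>x \<in> T\<close> \<open>y \<in> T\<close> by simp
  ultimately show ?thesis by blast
next
  assume "x \<in> T" "y \<notin> T"
  then show ?thesis using c_T T_mate ns c_alt[OF y] by auto
next
  assume "x \<notin> T" "y \<in> T"
  then show ?thesis using c_T T_mate ns c_alt[OF x] by auto
next
  assume "x \<notin> T" "y \<notin> T"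
  then show ?thesis using nonT_voltage_inj x y ns by simp
qed

lemma sep_same_ends:
  assumes hh: "h \<in> HF" "h' \<in> HF" and gg: "g \<in> carrier ZN" "g' \<in> carrier ZN"
    and e1: "sep.V h g = sep.V h' g'" and e2: "sep.V (mt h) g = sep.V (mt h') g'"
  shows "bg_edge sep.CV (h, g) = bg_edge sep.CV (h', g')"
proof -
  have mhh: "mt h \<in> HF" "mt h' \<in> HF" using mate_in hh by auto
  have v1: "vt h = vt h'" and f1: "g \<otimes>\<^bsub>ZN\<^esub> inv\<^bsub>ZN\<^esub> c h = g' \<otimes>\<^bsub>ZN\<^esub> inv\<^bsub>ZN\<^esub> c h'"
    using sep_V_eq[OF hh gg] e1 by auto
  have v2: "vt (mt h) = vt (mt h')" and f2: "g \<otimes>\<^bsub>ZN\<^esub> inv\<^bsub>ZN\<^esub> c (mt h) = g' \<otimes>\<^bsub>ZN\<^esub> inv\<^bsub>ZN\<^esub> c (mt h')"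
    using sep_V_eq[OF mhh gg] e2 by auto
  have "c h \<otimes>\<^bsub>ZN\<^esub> c (mt h') = c h' \<otimes>\<^bsub>ZN\<^esub> c (mt h)"
    using sep.G.ratio_cross[OF gg _ _ _ _ f1 f2] c_carrier hh mhh by simp
  then have "c h + c (mt h') = c h' + c (mt h)" using c_sum hh mhh by simp
  then have h': "h' = h \<or> (h' = mt h \<and> c h' = c h)"
    using voltage_determines_edge[OF hh v1 v2] by simp
  then have "g = g'" using f1 gg c_carrier hh by auto
  then show ?thesis using h' mate_mate hh unfolding bg_edge_def by (auto simp: sep.CV_mate)
qed

lemma sep_no_multi: "\<not> has_multiple_edges sep.CV"
proof
  assume "has_multiple_edges sep.CV"
  then obtain y y' where y: "y \<in> bg_half sep.CV" "y' \<in> bg_half sep.CV"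
    "bg_edge sep.CV y \<noteq> bg_edge sep.CV y'" "bg_endpoints sep.CV y = bg_endpoints sep.CV y'"
    unfolding has_multiple_edges_def by blast
  obtain h g h' g' where hg: "y = (h, g)" "y' = (h', g')" "h \<in> HF" "g \<in> carrier ZN"
    "h' \<in> HF" "g' \<in> carrier ZN"
    using y(1,2) by (auto simp: sep.CV_half)
  have ne: "bg_edge sep.CV (h, g) \<noteq> bg_edge sep.CV (h', g')" using y(3) hg by simp
  have "{sep.V h g, sep.V (mt h) g} = {sep.V h' g', sep.V (mt h') g'}"
    using y(4) hg unfolding bg_endpoints_def by (simp add: sep.CV_vtx sep.CV_mate)
  then consider "sep.V h g = sep.V h' g'" "sep.V (mt h) g = sep.V (mt h') g'"
    | "sep.V h g = sep.V (mt h') g'" "sep.V (mt h) g = sep.V (mt (mt h')) g'"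
    using mate_mate[OF hg(5)] by (auto simp: doubleton_eq_iff)
  then show False
  proof cases
    case 1 then show False using sep_same_ends[OF hg(3,5,4,6)] ne by blast
  next
    case 2
    then have "bg_edge sep.CV (h, g) = bg_edge sep.CV (mt h', g')"
      using sep_same_ends[OF hg(3) mate_in[OF hg(5)] hg(4,6)] by blast
    also have "\<dots> = bg_edge sep.CV (h', g')"
      unfolding bg_edge_def using mate_mate hg by (auto simp: sep.CV_mate)
    finally show False using ne by simp
  qed
qed

end

lemma separation_step:
  fixes \<Gamma> :: "('v, 'h, 'k::field) qbg"
  assumes q: "quantized_brauer_graph \<Gamma>" and m1: "\<forall>\<mu> \<in> bg_verts \<Gamma>. bg_mult \<Gamma> \<mu> = 1"
  shows "\<exists>(G::nat monoid) W. tower_step \<Gamma> G W \<and>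
           (\<forall>\<mu> \<in> bg_verts (bg_cover \<Gamma> G W). bg_mult (bg_cover \<Gamma> G W) \<mu> = 1) \<and>
           \<not> has_loop (bg_cover \<Gamma> G W) \<and> \<not> has_multiple_edges (bg_cover \<Gamma> G W)"
proof -
  interpret bgraph \<Gamma> using q unfolding quantized_brauer_graph_def bgraph_def by simp
  obtain T c N where "separated \<Gamma> T c N"
    using simple_spanning_exists simple_spanning.separated_exists by blast
  then interpret separated \<Gamma> T c N .
  obtain h0 where h0: "h0 \<in> HF" using half_ne by blast
  have bw: "sw_ord \<Gamma> ZN sep_weight \<mu> dvd bg_mult \<Gamma> \<mu>" for \<mu> by (simp add: sep_ord)
  have cT: "\<And>k. k \<in> T \<Longrightarrow> c (mt k) = c k" using c_T T_mate by simp
  have "brauer_graph sep.CV"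
  proof (rule sep.cover_brauer[OF bw])
    fix x assume "x \<in> bg_half sep.CV"
    then show "(sep.V h0 (c h0), bg_vtx sep.CV x) \<in> sep.EEC\<^sup>*"
      using sep.cover_connected[OF T_sub cT T_conn h0 sep_levels[OF h0]] by blast
  qed
  then show ?thesis
    using cover_tower_step[OF sep_cov q bw] sep.cover_mult_one sep_ord m1 sep_no_loop sep_no_multi
    by auto
qed

text \<open>Construction A kills the multiplicities; construction B, applied twice, keeps
  multiplicity one and removes loops and multiple edges (the third step only
  serves to give the tower its prescribed length).\<close>
theorem theorem6p7:
  fixes \<Gamma>0 :: "('v, 'h, 'k::field) qbg"
  assumes "quantized_brauer_graph \<Gamma>0"
  shows "\<exists>(G1 :: nat monoid) W1 (G2 :: nat monoid) W2 (G3 :: nat monoid) W3.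
           tower_step \<Gamma>0 G1 W1 \<and>
           tower_step (bg_cover \<Gamma>0 G1 W1) G2 W2 \<and>
           tower_step (bg_cover (bg_cover \<Gamma>0 G1 W1) G2 W2) G3 W3 \<and>
           (\<forall>\<mu> \<in> bg_verts (bg_cover (bg_cover (bg_cover \<Gamma>0 G1 W1) G2 W2) G3 W3).
              bg_mult (bg_cover (bg_cover (bg_cover \<Gamma>0 G1 W1) G2 W2) G3 W3) \<mu> = 1) \<and>
           \<not> has_loop (bg_cover (bg_cover (bg_cover \<Gamma>0 G1 W1) G2 W2) G3 W3) \<and>
           \<not> has_multiple_edges (bg_cover (bg_cover (bg_cover \<Gamma>0 G1 W1) G2 W2) G3 W3)"
proof -
  obtain G1 :: "nat monoid" and W1 where t1: "tower_step \<Gamma>0 G1 W1"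
    and m1: "\<forall>\<mu> \<in> bg_verts (bg_cover \<Gamma>0 G1 W1). bg_mult (bg_cover \<Gamma>0 G1 W1) \<mu> = 1"
    using multiplicity_killing[OF assms] by blast
  define \<Gamma>1 where "\<Gamma>1 = bg_cover \<Gamma>0 G1 W1"
  obtain G2 :: "nat monoid" and W2 where t2: "tower_step \<Gamma>1 G2 W2"
    and m2: "\<forall>\<mu> \<in> bg_verts (bg_cover \<Gamma>1 G2 W2). bg_mult (bg_cover \<Gamma>1 G2 W2) \<mu> = 1"
    using separation_step[of \<Gamma>1] t1 m1 unfolding \<Gamma>1_def tower_step_def by blast
  obtain G3 :: "nat monoid" and W3 where "tower_step (bg_cover \<Gamma>1 G2 W2) G3 W3"
    "(\<forall>\<mu> \<in> bg_verts (bg_cover (bg_cover \<Gamma>1 G2 W2) G3 W3).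
        bg_mult (bg_cover (bg_cover \<Gamma>1 G2 W2) G3 W3) \<mu> = 1) \<and>
     \<not> has_loop (bg_cover (bg_cover \<Gamma>1 G2 W2) G3 W3) \<and>
     \<not> has_multiple_edges (bg_cover (bg_cover \<Gamma>1 G2 W2) G3 W3)"
    using separation_step[of "bg_cover \<Gamma>1 G2 W2"] t2 m2 unfolding tower_step_def by blast
  then show ?thesis using t1 t2 unfolding \<Gamma>1_def by blast
qed

end
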